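(* Let $a>0$, $b\ge0$, $\delta>0$, and assume $A:=a+\beta-1>0$. Then $$\limsup_{N\to\infty}N^{-\chi\beta+bA}\,\mathbb E\Big[\sum_{k=1}^N w_{I^N_k}^a\,\mathbf 1\{w_{I^N_k}\le \delta N^{-b}\}\Big]\le(1-\beta)\frac{\delta^A}{A}.$$ The same holds if $I^N$ is replaced by $J^N$, $N$ i.i.d. draws with replacement from $\{1,\dots,\lceil N^\gamma\rceil\}$ with $\mathbb P(J^N_k=i\mid\Xi)=w_i^\beta/\sum_{j=1}^{\lceil N^\gamma\rceil}w_j^\beta$.
   Context: Fix $\gamma>1$, $\beta\in(0,1)$, $\chi=\frac{1-\gamma(1-\beta)}{\beta}$ (so $\chi\beta=1-\gamma(1-\beta)$). $\Xi$ is a Poisson point process on $(0,\infty)$ with intensity $x^{-2}dx$ and atoms $w_1>w_2>\cdots$. Conditionally on $\Xi$, $I^N=(I^N_1,\dots,I^N_N)$ are $N$ indices sampled without replacement from $\{1,\dots,\lceil N^\gamma\rceil\}$ with weights $w_i^\beta$ (each successive draw picks a not-yet-drawn index $i$ with probability proportional to $w_i^\beta$ among the not-yet-drawn ones). *)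

theory Defs
  imports "HOL-Probability.Probability"
begin

definition inv_sq_intensity :: "real measure" where
  "inv_sq_intensity = density lborel (\<lambda>x. ennreal (indicator {0<..} x / x\<^sup>2))"

definition poisson_point_process :: "'a measure \<Rightarrow> ('a \<Rightarrow> real set) \<Rightarrow> real measure \<Rightarrow> bool" where
  "poisson_point_process M Xi mu \<longleftrightarrow>
     (\<forall>\<omega>\<in>space M. Xi \<omega> \<subseteq> {0<..}) \<and>
     (\<forall>B. B \<in> sets borel \<and> B \<subseteq> {0<..} \<and> emeasure mu B < \<infinity> \<longrightarrow>
        (AE \<omega> in M. finite (Xi \<omega> \<inter> B)) \<and>
        (\<lambda>\<omega>. card (Xi \<omega> \<inter> B)) \<in> measurable M (count_space UNIV) \<and>
        (\<forall>k::nat. measure M {\<omega> \<in> space M. card (Xi \<omega> \<inter> B) = k}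
              = exp (- measure mu B) * measure mu B ^ k / fact k)) \<and>
     (\<forall>(n::nat) (B::nat \<Rightarrow> real set).
        disjoint_family_on B {..<n} \<and>
        (\<forall>i<n. B i \<in> sets borel \<and> B i \<subseteq> {0<..} \<and> emeasure mu (B i) < \<infinity>) \<longrightarrow>
        prob_space.indep_vars M (\<lambda>_. count_space UNIV) (\<lambda>i \<omega>. card (Xi \<omega> \<inter> B i)) {..<n})"

text \<open>The i-th largest atom (1-indexed): w_1 > w_2 > ...\<close>
definition desc_atom :: "real set \<Rightarrow> nat \<Rightarrow> real" where
  "desc_atom X i = (THE x. x \<in> X \<and> finite {y \<in> X. x < y} \<and> card {y \<in> X. x < y} + 1 = i)"

text \<open>Sampling N indices from {1..m} without replacement with weights w_i^beta:
  probability of the ordered outcome xs.\<close>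
definition wor_lists :: "nat \<Rightarrow> nat \<Rightarrow> nat list set" where
  "wor_lists m N = {xs. length xs = N \<and> distinct xs \<and> set xs \<subseteq> {1..m}}"

definition wor_prob :: "(nat \<Rightarrow> real) \<Rightarrow> real \<Rightarrow> nat \<Rightarrow> nat list \<Rightarrow> real" where
  "wor_prob w \<beta> m xs = (\<Prod>k<length xs. w (xs ! k) powr \<beta> /
       ((\<Sum>j=1..m. w j powr \<beta>) - (\<Sum>l<k. w (xs ! l) powr \<beta>)))"

definition wr_lists :: "nat \<Rightarrow> nat \<Rightarrow> nat list set" where
  "wr_lists m N = {xs. length xs = N \<and> set xs \<subseteq> {1..m}}"

definition wr_prob :: "(nat \<Rightarrow> real) \<Rightarrow> real \<Rightarrow> nat \<Rightarrow> nat list \<Rightarrow> real" where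
  "wr_prob w \<beta> m xs = (\<Prod>k<length xs. w (xs ! k) powr \<beta> / (\<Sum>j=1..m. w j powr \<beta>))"

end

theory Submission
  imports Defs
begin

text \<open>Conditionally on \<open>Xi\<close>, each of the \<open>N\<close> draws picks index \<open>j\<close> with probability at most
  \<open>w_j^\<beta> / L\<close>, where \<open>L\<close> is any lower bound for the \<open>\<beta>\<close>-weight of the indices not yet drawn
  (with replacement, the total weight is such a bound). So the conditional expectation is at
  most \<open>N \<Sum>_{w_j \<le> c} w_j^(a+\<beta>) / L\<close> with \<open>c = \<delta> N^(-b)\<close>. By Campbell's formula the numerator
  has mean \<open>\<integral>_0^c x^(a+\<beta>-2) dx = c^A / A\<close>, evaluated on a geometric grid \<open>c q^k\<close>. For \<open>L\<close>,
  cut the \<open>m = \<lceil>N^\<gamma>\<rceil>\<close> indices into \<open>K\<close> blocks ending at \<open>n_s \<approx> s m / K\<close>: there are about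
  \<open>n / \<rho>\<close> atoms above \<open>\<rho> / n\<close>, so outside an event of probability \<open>O(K^2 / m)\<close> the atoms of
  block \<open>s\<close> exceed \<open>\<rho> / n_s\<close>, and then \<open>L\<close> is about \<open>\<rho>^(1+\<beta>) m^(1-\<beta>) / (1-\<beta>)\<close> for large
  \<open>K\<close>. Since \<open>N^(1-\<chi>\<beta>) = N^(\<gamma>(1-\<beta>)) \<le> m^(1-\<beta>)\<close>, the normalised expectation is at most
  \<open>(1-\<beta>) \<delta>^A / A\<close> up to factors that tend to \<open>1\<close> as \<open>\<rho>, q \<rightarrow> 1\<close> and \<open>K \<rightarrow> \<infinity>\<close>.\<close>

section \<open>Sequential weighted sampling\<close>

definition wor_lists_on :: "'b set \<Rightarrow> nat \<Rightarrow> 'b list set" where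
  "wor_lists_on R n = {xs. length xs = n \<and> distinct xs \<and> set xs \<subseteq> R}"

definition wr_lists_on :: "'b set \<Rightarrow> nat \<Rightarrow> 'b list set" where
  "wr_lists_on R n = {xs. length xs = n \<and> set xs \<subseteq> R}"

definition wor_prob_on :: "('b \<Rightarrow> real) \<Rightarrow> real \<Rightarrow> 'b list \<Rightarrow> real" where
  "wor_prob_on p T xs = (\<Prod>k<length xs. p (xs ! k) / (T - (\<Sum>l<k. p (xs ! l))))"

definition wr_prob_on :: "('b \<Rightarrow> real) \<Rightarrow> real \<Rightarrow> 'b list \<Rightarrow> real" where
  "wr_prob_on p T xs = (\<Prod>k<length xs. p (xs ! k) / T)"

lemma finite_wor_lists_on: "finite R \<Longrightarrow> finite (wor_lists_on R n)"
  unfolding wor_lists_on_def by (rule finite_subset[OF _ finite_lists_length_eq[of R n]]) auto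

lemma finite_wr_lists_on: "finite R \<Longrightarrow> finite (wr_lists_on R n)"
  unfolding wr_lists_on_def by (rule finite_subset[OF _ finite_lists_length_eq[of R n]]) auto

lemma wor_lists_on_0 [simp]: "wor_lists_on R 0 = {[]}"
  by (auto simp: wor_lists_on_def)

lemma wr_lists_on_0 [simp]: "wr_lists_on R 0 = {[]}"
  by (auto simp: wr_lists_on_def)

lemma wor_lists_on_Suc:
  "wor_lists_on R (Suc n) = (\<lambda>(x, ys). x # ys) ` (SIGMA x:R. wor_lists_on (R - {x}) n)"
proof safe
  fix xs assume xs: "xs \<in> wor_lists_on R (Suc n)"
  then obtain x ys where "xs = x # ys" unfolding wor_lists_on_def by (cases xs) auto
  with xs show "xs \<in> (\<lambda>(x, ys). x # ys) ` (SIGMA x:R. wor_lists_on (R - {x}) n)"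
    by (auto simp: wor_lists_on_def intro!: image_eqI[of _ _ "(x, ys)"])
qed (auto simp: wor_lists_on_def)

lemma wr_lists_on_Suc: "wr_lists_on R (Suc n) = (\<lambda>(x, ys). x # ys) ` (R \<times> wr_lists_on R n)"
proof safe
  fix xs assume xs: "xs \<in> wr_lists_on R (Suc n)"
  then obtain x ys where "xs = x # ys" unfolding wr_lists_on_def by (cases xs) auto
  with xs show "xs \<in> (\<lambda>(x, ys). x # ys) ` (R \<times> wr_lists_on R n)"
    by (auto simp: wr_lists_on_def intro!: image_eqI[of _ _ "(x, ys)"])
qed (auto simp: wr_lists_on_def)

lemma sum_wor_lists_on_Suc:
  assumes "finite R"
  shows "(\<Sum>xs\<in>wor_lists_on R (Suc n). F xs) = (\<Sum>x\<in>R. \<Sum>ys\<in>wor_lists_on (R - {x}) n. F (x # ys))"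
proof -
  have "inj_on (\<lambda>(x, ys). x # ys) (SIGMA x:R. wor_lists_on (R - {x}) n)"
    by (auto simp: inj_on_def)
  then show ?thesis
    unfolding wor_lists_on_Suc using assms
    by (simp add: sum.reindex sum.Sigma finite_wor_lists_on case_prod_beta')
qed

lemma sum_wr_lists_on_Suc:
  assumes "finite R"
  shows "(\<Sum>xs\<in>wr_lists_on R (Suc n). F xs) = (\<Sum>x\<in>R. \<Sum>ys\<in>wr_lists_on R n. F (x # ys))"
proof -
  have "inj_on (\<lambda>(x, ys). x # ys) (R \<times> wr_lists_on R n)"
    by (auto simp: inj_on_def)
  then show ?thesis
    unfolding wr_lists_on_Suc using assms
    by (simp add: sum.reindex sum.cartesian_product finite_wr_lists_on case_prod_beta')
qed

lemma sum_lessThan_Suc_Cons: "(\<Sum>k<Suc n. g ((x # ys) ! k)) = g x + (\<Sum>k<n. g (ys ! k))"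
  by (simp add: sum.lessThan_Suc_shift del: sum.lessThan_Suc)

lemma wor_prob_on_Cons: "wor_prob_on p T (x # ys) = p x / T * wor_prob_on p (T - p x) ys"
proof -
  have "wor_prob_on p T (x # ys)
      = p x / T * (\<Prod>k<length ys. p (ys ! k) / (T - (\<Sum>l<Suc k. p ((x # ys) ! l))))"
    unfolding wor_prob_on_def
    by (simp add: prod.lessThan_Suc_shift del: prod.lessThan_Suc sum.lessThan_Suc)
  then show ?thesis
    unfolding sum_lessThan_Suc_Cons wor_prob_on_def by (simp add: algebra_simps)
qed

lemma wr_prob_on_Cons: "wr_prob_on p T (x # ys) = p x / T * wr_prob_on p T ys"
  unfolding wr_prob_on_def by (simp add: prod.lessThan_Suc_shift del: prod.lessThan_Suc)

lemma wor_prob_on_subprobability: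
  assumes "finite R" "\<And>x. x \<in> R \<Longrightarrow> p x \<ge> 0"
  shows "(\<forall>xs\<in>wor_lists_on R n. wor_prob_on p (sum p R) xs \<ge> 0)
    \<and> (\<Sum>xs\<in>wor_lists_on R n. wor_prob_on p (sum p R) xs) \<le> 1"
  using assms
proof (induction n arbitrary: R)
  case 0
  then show ?case by (simp add: wor_prob_on_def)
next
  case (Suc n)
  have mass: "x \<in> R \<Longrightarrow> sum p R - p x = sum p (R - {x})" for x
    using Suc.prems(1) by (simp add: sum_diff1)
  have IH: "x \<in> R \<Longrightarrow> (\<forall>xs\<in>wor_lists_on (R - {x}) n. wor_prob_on p (sum p (R - {x})) xs \<ge> 0)
      \<and> (\<Sum>xs\<in>wor_lists_on (R - {x}) n. wor_prob_on p (sum p (R - {x})) xs) \<le> 1" for x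
    using Suc.IH[of "R - {x}"] Suc.prems by auto
  have S: "sum p R \<ge> 0" using Suc.prems by (simp add: sum_nonneg)
  show ?case
  proof
    show "\<forall>xs\<in>wor_lists_on R (Suc n). 0 \<le> wor_prob_on p (sum p R) xs"
      using IH mass S Suc.prems by (auto simp: wor_lists_on_Suc wor_prob_on_Cons)
    have "(\<Sum>xs\<in>wor_lists_on R (Suc n). wor_prob_on p (sum p R) xs)
        = (\<Sum>x\<in>R. p x / sum p R * (\<Sum>ys\<in>wor_lists_on (R - {x}) n. wor_prob_on p (sum p (R - {x})) ys))"
      using Suc.prems
      by (auto simp: sum_wor_lists_on_Suc wor_prob_on_Cons mass sum_distrib_left intro!: sum.cong)
    also have "\<dots> \<le> (\<Sum>x\<in>R. p x / sum p R)"
      using IH S Suc.prems by (intro sum_mono mult_left_le) auto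
    also have "\<dots> \<le> 1"
      using S by (cases "sum p R = 0") (auto simp: sum_divide_distrib[symmetric])
    finally show "(\<Sum>xs\<in>wor_lists_on R (Suc n). wor_prob_on p (sum p R) xs) \<le> 1" .
  qed
qed

lemma wor_expectation_Suc:
  assumes "finite R"
  shows "(\<Sum>xs\<in>wor_lists_on R (Suc n). wor_prob_on p (sum p R) xs * (\<Sum>k<Suc n. g (xs ! k)))
    = (\<Sum>x\<in>R. p x / sum p R *
        (g x * (\<Sum>ys\<in>wor_lists_on (R - {x}) n. wor_prob_on p (sum p (R - {x})) ys)
          + (\<Sum>ys\<in>wor_lists_on (R - {x}) n. wor_prob_on p (sum p (R - {x})) ys * (\<Sum>k<n. g (ys ! k)))))"
proof -
  have "wor_prob_on p (sum p R) (x # ys) * (\<Sum>k<Suc n. g ((x # ys) ! k))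
      = p x / sum p R * (g x * wor_prob_on p (sum p (R - {x})) ys
          + wor_prob_on p (sum p (R - {x})) ys * (\<Sum>k<n. g (ys ! k)))" if "x \<in> R" for x ys
  proof -
    have mass: "sum p R - p x = sum p (R - {x})" using assms that by (simp add: sum_diff1)
    show ?thesis
      unfolding wor_prob_on_Cons sum_lessThan_Suc_Cons mass by (simp add: algebra_simps add_divide_distrib)
  qed
  then have "(\<Sum>xs\<in>wor_lists_on R (Suc n). wor_prob_on p (sum p R) xs * (\<Sum>k<Suc n. g (xs ! k)))
    = (\<Sum>x\<in>R. \<Sum>ys\<in>wor_lists_on (R - {x}) n. p x / sum p R * (g x * wor_prob_on p (sum p (R - {x})) ys
          + wor_prob_on p (sum p (R - {x})) ys * (\<Sum>k<n. g (ys ! k))))"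
    unfolding sum_wor_lists_on_Suc[OF assms] by (intro sum.cong refl) blast
  then show ?thesis by (simp only: sum_distrib_left[symmetric] sum.distrib)
qed

lemma weighted_average_le:
  fixes p g :: "'b \<Rightarrow> real"
  assumes "\<And>x. x \<in> R \<Longrightarrow> p x \<ge> 0" "L > 0" "sum p R \<ge> L" "(\<Sum>x\<in>R. p x * g x) \<ge> 0"
  shows "(\<Sum>x\<in>R. p x / sum p R * (g x + C)) \<le> (\<Sum>x\<in>R. p x * g x) / L + C"
proof -
  have "(\<Sum>x\<in>R. p x / sum p R * (g x + C)) = (\<Sum>x\<in>R. p x * g x / sum p R) + (\<Sum>x\<in>R. p x / sum p R) * C"
    by (simp add: distrib_left sum.distrib sum_distrib_right)
  also have "(\<Sum>x\<in>R. p x / sum p R) = 1"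
    using assms(2,3) by (simp add: sum_divide_distrib[symmetric])
  also have "(\<Sum>x\<in>R. p x * g x / sum p R) = (\<Sum>x\<in>R. p x * g x) / sum p R"
    by (simp add: sum_divide_distrib)
  also have "(\<Sum>x\<in>R. p x * g x) / sum p R + 1 * C \<le> (\<Sum>x\<in>R. p x * g x) / L + C"
    using assms(2-4) by (simp add: divide_left_mono)
  finally show ?thesis .
qed

text \<open>Each draw picks \<open>x\<close> with probability \<open>p x\<close> divided by the mass not yet drawn, which is
  at least \<open>L\<close> as long as fewer than \<open>n\<close> points have been removed.\<close>
lemma wor_expectation_le_residual:
  assumes "finite R" "\<And>x. x \<in> R \<Longrightarrow> p x \<ge> 0" "\<And>x. x \<in> R \<Longrightarrow> g x \<ge> 0" "L > 0"
    "\<And>D. D \<subseteq> R \<Longrightarrow> card D < n \<Longrightarrow> L \<le> sum p (R - D)"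
  shows "(\<Sum>xs\<in>wor_lists_on R n. wor_prob_on p (sum p R) xs * (\<Sum>k<n. g (xs ! k)))
    \<le> n * (\<Sum>x\<in>R. p x * g x) / L"
  using assms
proof (induction n arbitrary: R)
  case 0
  then show ?case by simp
next
  case (Suc n)
  let ?G = "\<Sum>x\<in>R. p x * g x"
  let ?Q = "\<lambda>x. \<Sum>ys\<in>wor_lists_on (R - {x}) n. wor_prob_on p (sum p (R - {x})) ys"
  let ?V = "\<lambda>x. \<Sum>ys\<in>wor_lists_on (R - {x}) n. wor_prob_on p (sum p (R - {x})) ys * (\<Sum>k<n. g (ys ! k))"
  have SL: "sum p R \<ge> L" using Suc.prems(5)[of "{}"] by simp
  have G: "?G \<ge> 0" using Suc.prems(2,3) by (auto intro!: sum_nonneg)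
  have V: "?V x \<le> n * ?G / L" if x: "x \<in> R" for x
  proof -
    have sub: "(\<Sum>y\<in>R - {x}. p y * g y) \<le> ?G"
      using Suc.prems(1-3) by (intro sum_mono2) auto
    have "?V x \<le> n * (\<Sum>y\<in>R - {x}. p y * g y) / L"
    proof (rule Suc.IH)
      fix D assume D: "D \<subseteq> R - {x}" "card D < n"
      then have "finite D" using Suc.prems(1) finite_subset by blast
      moreover have "x \<notin> D" using D by auto
      ultimately have "card (insert x D) < Suc n" "insert x D \<subseteq> R" using D x by auto
      then have "L \<le> sum p (R - insert x D)" by (rule Suc.prems(5)[rotated])
      moreover have "R - {x} - D = R - insert x D" by blast
      ultimately show "L \<le> sum p (R - {x} - D)" by simp
    qed (use Suc.prems(1-4) in auto)
    also have "\<dots> \<le> n * ?G / L"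
      using sub Suc.prems(4) by (intro divide_right_mono mult_left_mono) auto
    finally show ?thesis .
  qed
  have Q: "g x * ?Q x \<le> g x" if x: "x \<in> R" for x
    using wor_prob_on_subprobability[of "R - {x}" p n] Suc.prems(1-3) x
    by (intro mult_left_le) (auto intro: sum_nonneg)
  have "(\<Sum>xs\<in>wor_lists_on R (Suc n). wor_prob_on p (sum p R) xs * (\<Sum>k<Suc n. g (xs ! k)))
      = (\<Sum>x\<in>R. p x / sum p R * (g x * ?Q x + ?V x))"
    by (rule wor_expectation_Suc[OF Suc.prems(1)])
  also have "\<dots> \<le> (\<Sum>x\<in>R. p x / sum p R * (g x + n * ?G / L))"
    using Q V Suc.prems(2,4) SL by (intro sum_mono mult_left_mono add_mono) auto
  also have "\<dots> \<le> ?G / L + n * ?G / L"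
    using Suc.prems(2,4) SL G by (rule weighted_average_le)
  also have "\<dots> = Suc n * ?G / L" by (simp add: add_divide_distrib[symmetric] algebra_simps)
  finally show ?case .
qed

lemma wor_expectation_le_sup:
  assumes "finite R" "\<And>x. x \<in> R \<Longrightarrow> p x \<ge> 0" "\<And>x. x \<in> R \<Longrightarrow> g x \<le> G" "G \<ge> 0"
  shows "(\<Sum>xs\<in>wor_lists_on R n. wor_prob_on p (sum p R) xs * (\<Sum>k<n. g (xs ! k))) \<le> n * G"
proof -
  note Q = wor_prob_on_subprobability[OF assms(1,2), where n=n]
  have "(\<Sum>xs\<in>wor_lists_on R n. wor_prob_on p (sum p R) xs * (\<Sum>k<n. g (xs ! k)))
      \<le> (\<Sum>xs\<in>wor_lists_on R n. wor_prob_on p (sum p R) xs * (n * G))"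
  proof (intro sum_mono mult_left_mono)
    fix xs assume xs: "xs \<in> wor_lists_on R n"
    then have "(\<Sum>k<n. g (xs ! k)) \<le> (\<Sum>k<n. G)"
      by (intro sum_mono assms(3)) (auto simp: wor_lists_on_def)
    then show "(\<Sum>k<n. g (xs ! k)) \<le> n * G" by simp
  qed (use Q in auto)
  also have "\<dots> \<le> n * G"
    using Q assms(4) by (auto simp: sum_distrib_right[symmetric] intro!: mult_left_le_one_le sum_nonneg)
  finally show ?thesis .
qed

lemma wr_expectation_eq:
  assumes "finite R" "sum p R > 0"
  shows "(\<Sum>xs\<in>wr_lists_on R n. wr_prob_on p (sum p R) xs) = 1
    \<and> (\<Sum>xs\<in>wr_lists_on R n. wr_prob_on p (sum p R) xs * (\<Sum>k<n. g (xs ! k)))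
      = n * (\<Sum>x\<in>R. p x * g x) / sum p R"
proof (induction n)
  case 0
  then show ?case by (simp add: wr_prob_on_def)
next
  case (Suc n)
  define T where "T = sum p R"
  have total: "(\<Sum>x\<in>R. p x / T) = 1"
    using assms unfolding T_def by (simp add: sum_divide_distrib[symmetric])
  have "(\<Sum>xs\<in>wr_lists_on R (Suc n). wr_prob_on p T xs)
      = (\<Sum>x\<in>R. p x / T * (\<Sum>ys\<in>wr_lists_on R n. wr_prob_on p T ys))"
    unfolding sum_wr_lists_on_Suc[OF assms(1)] by (simp add: wr_prob_on_Cons sum_distrib_left)
  then have "(\<Sum>xs\<in>wr_lists_on R (Suc n). wr_prob_on p T xs) = (\<Sum>x\<in>R. p x / T)"
    using Suc.IH unfolding T_def by simp
  moreover have "(\<Sum>xs\<in>wr_lists_on R (Suc n). wr_prob_on p T xs * (\<Sum>k<Suc n. g (xs ! k)))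
      = (\<Sum>x\<in>R. p x / T * g x * (\<Sum>ys\<in>wr_lists_on R n. wr_prob_on p T ys)
          + p x / T * (\<Sum>ys\<in>wr_lists_on R n. wr_prob_on p T ys * (\<Sum>k<n. g (ys ! k))))"
    unfolding sum_wr_lists_on_Suc[OF assms(1)] wr_prob_on_Cons sum_lessThan_Suc_Cons
    by (simp add: sum_distrib_left sum.distrib sum_divide_distrib algebra_simps)
  moreover have "(\<Sum>x\<in>R. p x / T * g x * 1 + p x / T * (n * (\<Sum>x\<in>R. p x * g x) / T))
      = Suc n * (\<Sum>x\<in>R. p x * g x) / T"
    unfolding sum.distrib sum_distrib_right[symmetric] total
    by (simp add: sum_divide_distrib[symmetric] add_divide_distrib algebra_simps)
  ultimately show ?case
    using Suc.IH total unfolding T_def by simp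
qed

definition wor_mean :: "real \<Rightarrow> (nat \<Rightarrow> real) \<Rightarrow> nat \<Rightarrow> nat \<Rightarrow> (real \<Rightarrow> real) \<Rightarrow> real" where
  "wor_mean \<beta> w m N f = (\<Sum>xs\<in>wor_lists m N. wor_prob w \<beta> m xs * (\<Sum>k<N. f (w (xs ! k))))"

definition wr_mean :: "real \<Rightarrow> (nat \<Rightarrow> real) \<Rightarrow> nat \<Rightarrow> nat \<Rightarrow> (real \<Rightarrow> real) \<Rightarrow> real" where
  "wr_mean \<beta> w m N f = (\<Sum>xs\<in>wr_lists m N. wr_prob w \<beta> m xs * (\<Sum>k<N. f (w (xs ! k))))"

text \<open>What the argument needs from a scheme drawing \<open>N\<close> indices from \<open>{1..m}\<close> with weights
  \<open>w j powr \<beta>\<close>: each draw picks \<open>j\<close> with probability at most \<open>w j powr \<beta> / L\<close>, for any \<open>L\<close>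
  bounding the weight left after fewer than \<open>N\<close> removals. \<open>E w m N f\<close> is the expected value
  of \<open>\<Sum>k<N. f (w (I k))\<close>.\<close>
locale biased_sampler =
  fixes \<beta> :: real and E :: "(nat \<Rightarrow> real) \<Rightarrow> nat \<Rightarrow> nat \<Rightarrow> (real \<Rightarrow> real) \<Rightarrow> real"
  assumes le_residual: "\<lbrakk>\<And>j. j \<in> {1..m} \<Longrightarrow> 0 < w j; \<And>x. x > 0 \<Longrightarrow> 0 \<le> f x; 0 < L; 0 < N;
      \<And>D. D \<subseteq> {1..m} \<Longrightarrow> card D < N \<Longrightarrow> L \<le> (\<Sum>j\<in>{1..m} - D. w j powr \<beta>)\<rbrakk>
    \<Longrightarrow> E w m N f \<le> real N * (\<Sum>j=1..m. w j powr \<beta> * f (w j)) / L"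
    and le_sup: "\<lbrakk>\<And>j. j \<in> {1..m} \<Longrightarrow> 0 < w j; \<And>x. x > 0 \<Longrightarrow> f x \<le> G; 0 \<le> G\<rbrakk>
    \<Longrightarrow> E w m N f \<le> real N * G"

lemma wor_mean_eq:
  "wor_mean \<beta> w m N f = (\<Sum>xs\<in>wor_lists_on {1..m} N.
     wor_prob_on (\<lambda>j. w j powr \<beta>) (\<Sum>j=1..m. w j powr \<beta>) xs * (\<Sum>k<N. f (w (xs ! k))))"
  by (simp only: wor_mean_def wor_lists_def wor_lists_on_def wor_prob_def wor_prob_on_def)

lemma wr_mean_eq:
  "wr_mean \<beta> w m N f = (\<Sum>xs\<in>wr_lists_on {1..m} N.
     wr_prob_on (\<lambda>j. w j powr \<beta>) (\<Sum>j=1..m. w j powr \<beta>) xs * (\<Sum>k<N. f (w (xs ! k))))"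
  by (simp only: wr_mean_def wr_lists_def wr_lists_on_def wr_prob_def wr_prob_on_def)

lemma wor_mean_le_residual:
  assumes "\<And>j. j \<in> {1..m} \<Longrightarrow> 0 < w j" "\<And>x. x > 0 \<Longrightarrow> 0 \<le> f x" "0 < L"
    "\<And>D. D \<subseteq> {1..m} \<Longrightarrow> card D < N \<Longrightarrow> L \<le> (\<Sum>j\<in>{1..m} - D. w j powr \<beta>)"
  shows "wor_mean \<beta> w m N f \<le> N * (\<Sum>j=1..m. w j powr \<beta> * f (w j)) / L"
  unfolding wor_mean_eq
proof (rule wor_expectation_le_residual[where g = "\<lambda>j. f (w j)"])
  show "\<And>j. j \<in> {1..m} \<Longrightarrow> 0 \<le> f (w j)" by (rule assms(2)[OF assms(1)])
qed (use assms(3,4) in auto)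

lemma wor_mean_le_sup:
  assumes "\<And>j. j \<in> {1..m} \<Longrightarrow> 0 < w j" "\<And>x. x > 0 \<Longrightarrow> f x \<le> G" "0 \<le> G"
  shows "wor_mean \<beta> w m N f \<le> N * G"
  unfolding wor_mean_eq
proof (rule wor_expectation_le_sup[where g = "\<lambda>j. f (w j)"])
  show "\<And>j. j \<in> {1..m} \<Longrightarrow> f (w j) \<le> G" by (rule assms(2)[OF assms(1)])
qed (use assms(3) in auto)

lemma sum_powr_pos:
  fixes w :: "nat \<Rightarrow> real"
  assumes "\<And>j. j \<in> {1..m} \<Longrightarrow> 0 < w j" "m > 0"
  shows "(\<Sum>j=1..m. w j powr \<beta>) > 0"
proof -
  have "w j powr \<beta> > 0" if "j \<in> {1..m}" for j using assms(1)[OF that] by simp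
  then show ?thesis using assms(2) by (intro sum_pos) auto
qed

lemma wr_mean_eq_ratio:
  assumes "\<And>j. j \<in> {1..m} \<Longrightarrow> 0 < w j" "m > 0"
  shows "wr_mean \<beta> w m N f = N * (\<Sum>j=1..m. w j powr \<beta> * f (w j)) / (\<Sum>j=1..m. w j powr \<beta>)"
proof -
  have "(\<Sum>j=1..m. w j powr \<beta>) > 0" using assms by (rule sum_powr_pos)
  then show ?thesis
    unfolding wr_mean_eq using wr_expectation_eq[where g = "\<lambda>j. f (w j)" and R = "{1..m}"] by auto
qed

lemma wr_mean_le_residual:
  assumes w: "\<And>j. j \<in> {1..m} \<Longrightarrow> 0 < w j" and f: "\<And>x. x > 0 \<Longrightarrow> 0 \<le> f x"
    and L: "0 < L" "0 < N"
    and residual: "\<And>D. D \<subseteq> {1..m} \<Longrightarrow> card D < N \<Longrightarrow> L \<le> (\<Sum>j\<in>{1..m} - D. w j powr \<beta>)"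
  shows "wr_mean \<beta> w m N f \<le> N * (\<Sum>j=1..m. w j powr \<beta> * f (w j)) / L"
proof -
  have LS: "L \<le> (\<Sum>j=1..m. w j powr \<beta>)" using residual[of "{}"] L by auto
  then have "m > 0" using L by (intro Nat.gr0I) simp
  have "wr_mean \<beta> w m N f = N * (\<Sum>j=1..m. w j powr \<beta> * f (w j)) / (\<Sum>j=1..m. w j powr \<beta>)"
    using w \<open>m > 0\<close> by (rule wr_mean_eq_ratio)
  also have "\<dots> \<le> N * (\<Sum>j=1..m. w j powr \<beta> * f (w j)) / L"
    using LS L w f by (intro divide_left_mono mult_nonneg_nonneg sum_nonneg) auto
  finally show ?thesis .
qed

lemma wr_mean_le_sup:
  assumes w: "\<And>j. j \<in> {1..m} \<Longrightarrow> 0 < w j" and f: "\<And>x. x > 0 \<Longrightarrow> f x \<le> G" and G: "0 \<le> G"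
  shows "wr_mean \<beta> w m N f \<le> N * G"
proof (cases "m = 0")
  case True
  then show ?thesis
    using G by (cases N) (auto simp: wr_mean_eq wr_lists_on_Suc)
next
  case False
  let ?S = "\<Sum>j=1..m. w j powr \<beta>"
  have S: "?S > 0" using w False by (intro sum_powr_pos) auto
  have "(\<Sum>j=1..m. w j powr \<beta> * f (w j)) \<le> (\<Sum>j=1..m. w j powr \<beta> * G)"
    using w f by (intro sum_mono mult_left_mono) auto
  then have "N * (\<Sum>j=1..m. w j powr \<beta> * f (w j)) / ?S \<le> N * (?S * G) / ?S"
    using S by (intro divide_right_mono mult_left_mono) (auto simp: sum_distrib_right)
  moreover have "wr_mean \<beta> w m N f = N * (\<Sum>j=1..m. w j powr \<beta> * f (w j)) / ?S"
    using w False by (intro wr_mean_eq_ratio) auto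
  ultimately show ?thesis using S by simp
qed

lemma biased_sampler_wor_mean: "biased_sampler \<beta> (wor_mean \<beta>)"
  by unfold_locales (rule wor_mean_le_residual wor_mean_le_sup; assumption)+

lemma biased_sampler_wr_mean: "biased_sampler \<beta> (wr_mean \<beta>)"
  by unfold_locales (rule wr_mean_le_residual wr_mean_le_sup; assumption)+

definition desc_enumerable :: "real set \<Rightarrow> bool" where
  "desc_enumerable X \<longleftrightarrow> X \<subseteq> {0<..} \<and> infinite X \<and> (\<forall>e>0. finite {x\<in>X. e \<le> x})"

lemma desc_enumerable_finite_above: "desc_enumerable X \<Longrightarrow> x > 0 \<Longrightarrow> finite {y\<in>X. x < y}"
  unfolding desc_enumerable_def by (rule finite_subset[of _ "{y\<in>X. x \<le> y}"]) auto

lemma desc_enumerable_finite_above_atom: "desc_enumerable X \<Longrightarrow> x \<in> X \<Longrightarrow> finite {y\<in>X. x < y}"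
  using desc_enumerable_finite_above[of X x] unfolding desc_enumerable_def by auto

lemma desc_enumerable_max_below:
  assumes X: "desc_enumerable X" and y0: "y0 \<in> X" "y0 < t"
  shows "\<exists>z\<in>X. z < t \<and> (\<forall>y\<in>X. z < y \<longrightarrow> t \<le> y)"
proof -
  let ?S = "{y\<in>X. y0 \<le> y \<and> y < t}"
  have "y0 > 0" using X y0 unfolding desc_enumerable_def by auto
  then have "finite ?S"
    using X unfolding desc_enumerable_def by (auto intro: finite_subset[of _ "{y\<in>X. y0 \<le> y}"])
  moreover have "y0 \<in> ?S" using y0 by auto
  ultimately have "Max ?S \<in> ?S" "\<forall>y\<in>?S. y \<le> Max ?S"
    using Max_in[of ?S] Max_ge[of ?S] by blast+
  then show ?thesis by (intro bexI[of _ "Max ?S"]) force+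
qed

lemma desc_enumerable_rank_exists:
  assumes X: "desc_enumerable X"
  shows "\<exists>x\<in>X. card {y\<in>X. x < y} = k"
proof (induction k)
  case 0
  obtain x0 where x0: "x0 \<in> X" using X unfolding desc_enumerable_def by fastforce
  let ?S = "{y\<in>X. x0 \<le> y}"
  have fin: "finite ?S" using X x0 unfolding desc_enumerable_def by auto
  with x0 have M: "Max ?S \<in> ?S" by (intro Max_in) auto
  have "{y\<in>X. Max ?S < y} = {}"
  proof (intro equalityI subsetI)
    fix y assume "y \<in> {y\<in>X. Max ?S < y}"
    with M have "y \<in> ?S" "Max ?S < y" by auto
    with Max_ge[OF fin] show "y \<in> {}" by fastforce
  qed simp
  with M have "Max ?S \<in> X" "{y\<in>X. Max ?S < y} = {}" by auto
  then show ?case by (metis card.empty)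
next
  case (Suc k)
  then obtain x where x: "x \<in> X" "card {y\<in>X. x < y} = k" by blast
  have "finite {y\<in>X. x \<le> y}" using X x unfolding desc_enumerable_def by auto
  moreover have "X = {y\<in>X. y < x} \<union> {y\<in>X. x \<le> y}" by auto
  ultimately have "infinite {y\<in>X. y < x}" using X unfolding desc_enumerable_def by (metis finite_Un)
  then obtain y0 where "y0 \<in> X" "y0 < x" by (metis (no_types, lifting) empty_Collect_eq finite.emptyI)
  then obtain z where z: "z \<in> X" "z < x" "\<forall>y\<in>X. z < y \<longrightarrow> x \<le> y"
    using desc_enumerable_max_below[OF X] by blast
  then have "{y\<in>X. z < y} = insert x {y\<in>X. x < y}" using x(1) by force
  then have "card {y\<in>X. z < y} = Suc k"
    using desc_enumerable_finite_above_atom[OF X x(1)] x by simp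
  then show ?case using z(1) by blast
qed

lemma desc_enumerable_rank_unique:
  assumes X: "desc_enumerable X" and "x \<in> X" "x' \<in> X" "card {y\<in>X. x < y} = card {y\<in>X. x' < y}"
  shows "x = x'"
proof (rule ccontr)
  assume ne: "x \<noteq> x'"
  have *: "card {y\<in>X. b < y} < card {y\<in>X. a < y}" if "a \<in> X" "b \<in> X" "a < b" for a b
  proof (rule psubset_card_mono)
    show "finite {y\<in>X. a < y}" using desc_enumerable_finite_above_atom[OF X that(1)] .
    show "{y\<in>X. b < y} \<subset> {y\<in>X. a < y}" using that by auto
  qed
  show False
  proof (cases "x < x'")
    case True then show False using *[of x x'] assms by simp
  next
    case False then have "x' < x" using ne by simp
    then show False using *[of x' x] assms by simp
  qed
qed

lemma desc_atom_in_rank: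
  assumes X: "desc_enumerable X" and i: "i \<ge> 1"
  shows "desc_atom X i \<in> X" "card {y\<in>X. desc_atom X i < y} + 1 = i"
proof -
  obtain x where x: "x \<in> X" "card {y\<in>X. x < y} = i - 1" using desc_enumerable_rank_exists[OF X] by blast
  have P: "x \<in> X \<and> finite {y\<in>X. x < y} \<and> card {y\<in>X. x < y} + 1 = i"
    using x i desc_enumerable_finite_above_atom[OF X x(1)] by simp
  have "desc_atom X i = x"
    unfolding desc_atom_def
  proof (rule the_equality)
    show "x \<in> X \<and> finite {y\<in>X. x < y} \<and> card {y\<in>X. x < y} + 1 = i" by (rule P)
    fix x' assume "x' \<in> X \<and> finite {y\<in>X. x' < y} \<and> card {y\<in>X. x' < y} + 1 = i"
    then show "x' = x" using desc_enumerable_rank_unique[OF X, of x' x] P by auto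
  qed
  then show "desc_atom X i \<in> X" "card {y\<in>X. desc_atom X i < y} + 1 = i" using P by auto
qed

lemma desc_atom_pos: "desc_enumerable X \<Longrightarrow> i \<ge> 1 \<Longrightarrow> desc_atom X i > 0"
  using desc_atom_in_rank(1)[of X i] unfolding desc_enumerable_def by auto

lemma desc_atom_strict_antimono:
  assumes X: "desc_enumerable X" and "1 \<le> i" "i < j"
  shows "desc_atom X j < desc_atom X i"
proof (rule ccontr)
  assume "\<not> desc_atom X j < desc_atom X i"
  then have le: "desc_atom X i \<le> desc_atom X j" by simp
  have "{y\<in>X. desc_atom X j < y} \<subseteq> {y\<in>X. desc_atom X i < y}" using le by auto
  then have "card {y\<in>X. desc_atom X j < y} \<le> card {y\<in>X. desc_atom X i < y}"
    using desc_enumerable_finite_above_atom[OF X desc_atom_in_rank(1)[OF X assms(2)]] by (rule card_mono[rotated])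
  then show False using desc_atom_in_rank(2)[OF X, of i] desc_atom_in_rank(2)[OF X, of j] assms by simp
qed

lemma desc_atom_antimono:
  assumes X: "desc_enumerable X" and "1 \<le> i" "i \<le> j"
  shows "desc_atom X j \<le> desc_atom X i"
  using desc_atom_strict_antimono[OF X, of i j] assms by (cases "i = j") auto

lemma inj_on_desc_atom: "desc_enumerable X \<Longrightarrow> inj_on (desc_atom X) {1..}"
  unfolding inj_on_def
  by (metis atLeast_iff desc_atom_strict_antimono linorder_neqE_nat order_less_irrefl)

lemma desc_atom_ge_if_card:
  assumes X: "desc_enumerable X" and i: "i \<ge> 1" and y: "y > 0" and c: "card {x\<in>X. y \<le> x} \<ge> i"
  shows "desc_atom X i \<ge> y"
proof (rule ccontr)
  assume "\<not> y \<le> desc_atom X i"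
  then have "{x\<in>X. y \<le> x} \<subseteq> {x\<in>X. desc_atom X i < x}" by auto
  then have "card {x\<in>X. y \<le> x} \<le> card {x\<in>X. desc_atom X i < x}"
    using desc_enumerable_finite_above_atom[OF X desc_atom_in_rank(1)[OF X i]] by (rule card_mono[rotated])
  then show False using c desc_atom_in_rank(2)[OF X i] by simp
qed

section \<open>Poisson tail bounds\<close>

lemma exp_partial_sum_le:
  fixes x :: real assumes "x \<ge> 0"
  shows "(\<Sum>k\<le>n. x^k / fact k) \<le> exp x"
proof -
  have s: "(\<lambda>k. x^k / fact k) sums exp x" using exp_converges[of x] by (simp add: divide_inverse mult.commute)
  show ?thesis
    using sum_le_suminf[OF sums_summable[OF s], of "{..n}"] sums_unique[OF s] assms by auto
qed

lemma poisson_cdf_le: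
  fixes l \<theta> :: real
  assumes "l \<ge> 0" "0 < \<theta>" "\<theta> \<le> 1"
  shows "(\<Sum>k\<le>n. exp (-l) * l^k / fact k) \<le> exp (l * (\<theta> - 1)) / \<theta>^n"
proof -
  have "(\<Sum>k\<le>n. exp (-l) * l^k / fact k) \<le> (\<Sum>k\<le>n. exp (-l) / \<theta>^n * ((l*\<theta>)^k / fact k))"
  proof (rule sum_mono)
    fix k assume k: "k \<in> {..n}"
    have "\<theta>^n \<le> \<theta>^k" using assms k by (intro power_decreasing) auto
    then have "1 \<le> \<theta>^k / \<theta>^n" using assms by simp
    then have "exp (-l) * l^k / fact k * 1 \<le> exp (-l) * l^k / fact k * (\<theta>^k / \<theta>^n)"
      using assms by (intro mult_left_mono) auto
    then show "exp (-l) * l^k / fact k \<le> exp (-l) / \<theta>^n * ((l*\<theta>)^k / fact k)"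
      by (simp add: power_mult_distrib field_simps)
  qed
  also have "\<dots> = exp (-l) / \<theta>^n * (\<Sum>k\<le>n. (l*\<theta>)^k / fact k)" by (simp add: sum_distrib_left)
  also have "\<dots> \<le> exp (-l) / \<theta>^n * exp (l*\<theta>)"
    using assms by (intro mult_left_mono exp_partial_sum_le) auto
  also have "\<dots> = exp (l * (\<theta> - 1)) / \<theta>^n" by (simp add: exp_add[symmetric] algebra_simps)
  finally show ?thesis .
qed

text \<open>\<open>exp (- n * poisson_rate \<rho>)\<close> is the Chernoff bound for a Poisson variable of mean
  \<open>n / \<rho>\<close> to be at most \<open>n\<close>.\<close>
definition poisson_rate :: "real \<Rightarrow> real" where "poisson_rate \<rho> = 1/\<rho> - 1 + ln \<rho>"

lemma poisson_rate_pos: "0 < \<rho> \<Longrightarrow> \<rho> < 1 \<Longrightarrow> poisson_rate \<rho> > 0"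
proof -
  assume r: "0 < \<rho>" "\<rho> < 1"
  have "1/\<rho> > 1" using r by simp
  then have "ln (1 + (1/\<rho> - 1)) < 1/\<rho> - 1" by (intro ln_add_one_self_less_self) simp
  then have "ln (1/\<rho>) < 1/\<rho> - 1" by simp
  then show ?thesis using r by (simp add: poisson_rate_def ln_div)
qed

lemma poisson_cdf_le_rate:
  fixes \<rho> :: real
  assumes "0 < \<rho>" "\<rho> < 1" "n > 0"
  shows "(\<Sum>k\<le>n. exp (-(n/\<rho>)) * (n/\<rho>)^k / fact k) \<le> 1 / (n * poisson_rate \<rho>)"
proof -
  have "(\<Sum>k\<le>n. exp (-(n/\<rho>)) * (n/\<rho>)^k / fact k) \<le> exp ((n/\<rho>) * (\<rho> - 1)) / \<rho>^n"
    using assms by (intro poisson_cdf_le) auto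
  also have "\<rho>^n = exp (n * ln \<rho>)" using assms by (simp add: exp_of_nat_mult)
  also have "exp ((n/\<rho>) * (\<rho> - 1)) / exp (n * ln \<rho>) = exp (-(n * poisson_rate \<rho>))"
    using assms by (simp add: exp_diff[symmetric] poisson_rate_def field_simps)
  also have "\<dots> \<le> 1 / (n * poisson_rate \<rho>)"
  proof -
    have pos: "n * poisson_rate \<rho> > 0" using assms poisson_rate_pos by simp
    have "n * poisson_rate \<rho> < exp (n * poisson_rate \<rho>)" using exp_ge_add_one_self[of "n * poisson_rate \<rho>"] by linarith
    then show ?thesis using pos by (simp add: exp_minus field_simps)
  qed
  finally show ?thesis .
qed

lemma poisson_mean:
  fixes l :: real assumes "l \<ge> 0"
  shows "(\<Sum>k. ennreal (real k * (exp (-l) * l^k / fact k))) = ennreal l"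
proof (rule suminf_ennreal_eq)
  show "0 \<le> real k * (exp (-l) * l^k / fact k)" for k using assms by simp
  have s: "(\<lambda>k. l^k / fact k) sums exp l" using exp_converges[of l] by (simp add: divide_inverse mult.commute)
  have e: "l * exp (-l) * exp l = l" by (simp add: exp_minus field_simps)
  have fe: "(\<lambda>j. l * exp (-l) * (l^j / fact j)) = (\<lambda>j. real (Suc j) * (exp (-l) * l^(Suc j) / fact (Suc j)))"
  proof
    fix j
    have f: "(fact (Suc j)::real) = real (Suc j) * fact j" by (simp only: fact_Suc of_nat_mult)
    have p: "real (Suc j) > 0" "(fact j::real) > 0" by auto
    show "l * exp (-l) * (l^j / fact j) = real (Suc j) * (exp (-l) * l^(Suc j) / fact (Suc j))"
      unfolding f using p by (simp only: power_Suc) (simp add: field_simps del: of_nat_Suc)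
  qed
  have "(\<lambda>j. l * exp (-l) * (l^j / fact j)) sums (l * exp (-l) * exp l)"
    by (rule sums_mult[OF s])
  then have "(\<lambda>j. real (Suc j) * (exp (-l) * l^(Suc j) / fact (Suc j))) sums l" unfolding e fe .
  then show "(\<lambda>k. real k * (exp (-l) * l^k / fact k)) sums l"
    by (subst (asm) sums_Suc_iff) simp
qed

section \<open>The Poisson process with intensity \<open>x\<^sup>-\<^sup>2 dx\<close>\<close>

lemma sets_inv_sq_intensity[simp]: "sets inv_sq_intensity = sets borel"
  unfolding inv_sq_intensity_def by simp

lemma emeasure_inv_sq_intensity_atLeast:
  assumes y: "y > 0"
  shows "emeasure inv_sq_intensity {y..} = ennreal (1/y)"
proof -
  have "emeasure inv_sq_intensity {y..} = (\<integral>\<^sup>+ x. ennreal (indicator {0<..} x / x\<^sup>2) * indicator {y..} x \<partial>lborel)"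
    unfolding inv_sq_intensity_def by (subst emeasure_density) auto
  also have "\<dots> = (\<integral>\<^sup>+ x. ennreal (1 / x\<^sup>2) * indicator {y..} x \<partial>lborel)"
    using y by (intro nn_integral_cong) (auto split: split_indicator)
  also have "\<dots> = ennreal (0 - (- 1 / y))"
  proof (rule nn_integral_FTC_atLeast)
    show "(\<lambda>x::real. 1 / x\<^sup>2) \<in> borel_measurable borel" by measurable
    show "DERIV (\<lambda>x. - 1 / x) x :> 1 / x\<^sup>2" if "y \<le> x" for x
      using that y by (auto intro!: derivative_eq_intros simp: power2_eq_square field_simps)
    show "0 \<le> 1 / x\<^sup>2" for x :: real by simp
    show "((\<lambda>x::real. - 1 / x) \<longlongrightarrow> 0) at_top"
      by (intro tendsto_divide_0[OF tendsto_const] filterlim_at_top_imp_at_infinity filterlim_ident)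
  qed
  finally show ?thesis by simp
qed

lemma emeasure_inv_sq_intensity_atLeastLessThan:
  assumes "0 < a" "a \<le> b"
  shows "emeasure inv_sq_intensity {a..<b} = ennreal (1/a - 1/b)"
proof -
  have "{a..<b} = {a..} - {b..}" by auto
  then have "emeasure inv_sq_intensity {a..<b} = emeasure inv_sq_intensity {a..} - emeasure inv_sq_intensity {b..}"
    using assms by (simp add: emeasure_Diff emeasure_inv_sq_intensity_atLeast)
  also have "\<dots> = ennreal (1/a - 1/b)"
    using assms by (simp add: emeasure_inv_sq_intensity_atLeast ennreal_minus frac_le)
  finally show ?thesis .
qed

definition finite_intensity_set :: "real set \<Rightarrow> bool" where
  "finite_intensity_set B \<longleftrightarrow>
     B \<in> sets borel \<and> B \<subseteq> {0<..} \<and> emeasure inv_sq_intensity B < \<infinity>"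

lemma finite_intensity_set_atLeast: "y > 0 \<Longrightarrow> finite_intensity_set {y..}"
  by (auto simp: finite_intensity_set_def emeasure_inv_sq_intensity_atLeast)

lemma finite_intensity_set_atLeastLessThan: "0 < a \<Longrightarrow> a \<le> b \<Longrightarrow> finite_intensity_set {a..<b}"
  by (auto simp: finite_intensity_set_def emeasure_inv_sq_intensity_atLeastLessThan)

locale inv_sq_poisson_process = prob_space P for P :: "'a measure" +
  fixes Xi :: "'a \<Rightarrow> real set"
  assumes poisson_point_process: "poisson_point_process P Xi inv_sq_intensity"
begin

lemma atoms_pos: "\<omega> \<in> space P \<Longrightarrow> Xi \<omega> \<subseteq> {0<..}"
  using poisson_point_process unfolding poisson_point_process_def by blast

lemma AE_finite_atoms_in: "finite_intensity_set B \<Longrightarrow> AE \<omega> in P. finite (Xi \<omega> \<inter> B)"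
  using poisson_point_process unfolding poisson_point_process_def finite_intensity_set_def by blast

lemma measurable_count_atoms:
  "finite_intensity_set B \<Longrightarrow> (\<lambda>\<omega>. card (Xi \<omega> \<inter> B)) \<in> measurable P (count_space UNIV)"
  using poisson_point_process unfolding poisson_point_process_def finite_intensity_set_def by blast

lemma prob_count_atoms_eq:
  "finite_intensity_set B \<Longrightarrow> prob {\<omega>\<in>space P. card (Xi \<omega> \<inter> B) = k} =
     exp (- measure inv_sq_intensity B) * measure inv_sq_intensity B ^ k / fact k"
  using poisson_point_process unfolding poisson_point_process_def finite_intensity_set_def by blast

lemma count_atoms_sets:
  assumes "finite_intensity_set B"
  shows "{\<omega>\<in>space P. card (Xi \<omega> \<inter> B) = k} \<in> sets P"
    "{\<omega>\<in>space P. card (Xi \<omega> \<inter> B) \<le> k} \<in> sets P"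
  using measurable_count_atoms[OF assms] by measurable

lemma borel_measurable_count_atoms:
  "finite_intensity_set B \<Longrightarrow> (\<lambda>\<omega>. real (card (Xi \<omega> \<inter> B))) \<in> borel_measurable P"
  using measurable_count_atoms by measurable

lemma prob_count_atoms_le:
  assumes B: "finite_intensity_set B"
  shows "prob {\<omega>\<in>space P. card (Xi \<omega> \<inter> B) \<le> n} =
    (\<Sum>k\<le>n. exp (- measure inv_sq_intensity B) * measure inv_sq_intensity B ^ k / fact k)"
proof -
  have "{\<omega>\<in>space P. card (Xi \<omega> \<inter> B) \<le> n} = (\<Union>k\<le>n. {\<omega>\<in>space P. card (Xi \<omega> \<inter> B) = k})"
    by auto
  also have "prob \<dots> = (\<Sum>k\<le>n. prob {\<omega>\<in>space P. card (Xi \<omega> \<inter> B) = k})"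
    by (rule measure_finite_Union) (auto simp: disjoint_family_on_def count_atoms_sets[OF B])
  finally show ?thesis using prob_count_atoms_eq[OF B] by simp
qed

lemma prob_few_atoms_above:
  assumes "0 < \<rho>" "\<rho> < 1" "n > 0"
  shows "prob {\<omega>\<in>space P. card (Xi \<omega> \<inter> {\<rho>/n..}) \<le> n} \<le> 1 / (n * poisson_rate \<rho>)"
proof -
  have y: "\<rho>/n > 0" using assms by simp
  have "measure inv_sq_intensity {\<rho>/n..} = n/\<rho>"
    using emeasure_inv_sq_intensity_atLeast[OF y] assms by (simp add: measure_def)
  then show ?thesis
    using prob_count_atoms_le[OF finite_intensity_set_atLeast[OF y]] poisson_cdf_le_rate[OF assms]
    by simp
qed

lemma expected_count_atoms:
  assumes B: "finite_intensity_set B"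
  shows "(\<integral>\<^sup>+\<omega>. ennreal (real (card (Xi \<omega> \<inter> B))) \<partial>P) = emeasure inv_sq_intensity B"
proof -
  define A where "A k = {\<omega>\<in>space P. card (Xi \<omega> \<inter> B) = k}" for k
  define l where "l = measure inv_sq_intensity B"
  have A: "A k \<in> sets P" for k unfolding A_def by (rule count_atoms_sets[OF B])
  have disj: "disjoint_family A" unfolding A_def disjoint_family_on_def by auto
  have "(\<integral>\<^sup>+\<omega>. ennreal (real (card (Xi \<omega> \<inter> B))) \<partial>P)
      = (\<integral>\<^sup>+\<omega>. (\<Sum>k. ennreal (real k) * indicator (A k) \<omega>) \<partial>P)"
  proof (rule nn_integral_cong)
    fix \<omega> assume "\<omega> \<in> space P"
    then have "\<omega> \<in> A (card (Xi \<omega> \<inter> B))" unfolding A_def by simp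
    then show "ennreal (real (card (Xi \<omega> \<inter> B))) = (\<Sum>k. ennreal (real k) * indicator (A k) \<omega>)"
      using suminf_cmult_indicator[OF disj] by simp
  qed
  also have "\<dots> = (\<Sum>k. \<integral>\<^sup>+\<omega>. ennreal (real k) * indicator (A k) \<omega> \<partial>P)"
    by (rule nn_integral_suminf) (use A in auto)
  also have "\<dots> = (\<Sum>k. ennreal (real k) * ennreal (exp (-l) * l^k / fact k))"
    using A prob_count_atoms_eq[OF B]
    by (simp add: nn_integral_cmult_indicator emeasure_eq_measure A_def l_def)
  also have "\<dots> = (\<Sum>k. ennreal (real k * (exp (-l) * l^k / fact k)))"
    by (simp add: ennreal_mult[symmetric] l_def)
  also have "\<dots> = ennreal l" by (rule poisson_mean) (simp add: l_def)
  also have "\<dots> = emeasure inv_sq_intensity B"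
    using B unfolding l_def finite_intensity_set_def
    by (simp add: emeasure_eq_ennreal_measure less_top[symmetric])
  finally show ?thesis .
qed

lemma AE_finite_atoms_above: "AE \<omega> in P. \<forall>e>0. finite {x\<in>Xi \<omega>. e \<le> x}"
proof -
  have "AE \<omega> in P. \<forall>m. finite (Xi \<omega> \<inter> {inverse (real (Suc m))..})"
    by (subst AE_all_countable) (intro allI AE_finite_atoms_in finite_intensity_set_atLeast; simp)
  then show ?thesis
  proof eventually_elim
    case (elim \<omega>)
    show ?case
    proof safe
      fix e :: real assume "e > 0"
      then obtain m where "inverse (real (Suc m)) < e" using reals_Archimedean by blast
      then have "{x\<in>Xi \<omega>. e \<le> x} \<subseteq> Xi \<omega> \<inter> {inverse (real (Suc m))..}" by auto
      with elim show "finite {x\<in>Xi \<omega>. e \<le> x}" by (blast intro: finite_subset)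
    qed
  qed
qed

lemma AE_infinite_atoms: "AE \<omega> in P. infinite (Xi \<omega>)"
proof -
  define B where "B m = {(1/2) / real (Suc m)..}" for m
  have B: "finite_intensity_set (B m)" for m
    unfolding B_def by (rule finite_intensity_set_atLeast) simp
  have rate: "poisson_rate (1/2) > 0" by (rule poisson_rate_pos) auto
  have "AE \<omega> in P. \<not> (finite (Xi \<omega>) \<and> card (Xi \<omega>) \<le> j)" for j
  proof (rule AE_I')
    define E where "E = (\<Inter>m. {\<omega>\<in>space P. card (Xi \<omega> \<inter> B m) \<le> j})"
    have E: "E \<in> sets P" unfolding E_def using count_atoms_sets(2)[OF B] by auto
    have "prob E \<le> 1 / (real (Suc m) * poisson_rate (1/2))" if "j \<le> m" for m
    proof -
      have "E \<subseteq> {\<omega>\<in>space P. card (Xi \<omega> \<inter> B m) \<le> j}" unfolding E_def by blast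
      also have "\<dots> \<subseteq> {\<omega>\<in>space P. card (Xi \<omega> \<inter> {(1/2) / real (Suc m)..}) \<le> Suc m}"
        unfolding B_def using that by auto
      finally have "E \<subseteq> {\<omega>\<in>space P. card (Xi \<omega> \<inter> {(1/2) / real (Suc m)..}) \<le> Suc m}" .
      then have "prob E \<le> prob {\<omega>\<in>space P. card (Xi \<omega> \<inter> {(1/2) / real (Suc m)..}) \<le> Suc m}"
        using count_atoms_sets(2)[OF B[of m]] unfolding B_def by (intro finite_measure_mono) auto
      also have "\<dots> \<le> 1 / (real (Suc m) * poisson_rate (1/2))" by (rule prob_few_atoms_above) auto
      finally show ?thesis .
    qed
    moreover have "(\<lambda>m. 1 / poisson_rate (1/2) / real (Suc m)) \<longlonglongrightarrow> 0"
      by (intro LIMSEQ_Suc lim_const_over_n)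
    ultimately have "prob E \<le> 0"
      by (intro tendsto_le[OF trivial_limit_sequentially _ tendsto_const])
        (auto simp: eventually_sequentially mult.commute)
    then show "E \<in> null_sets P" using E measure_nonneg[of P E] by (simp add: null_sets_def emeasure_eq_measure)
    show "{\<omega>\<in>space P. \<not> \<not> (finite (Xi \<omega>) \<and> card (Xi \<omega>) \<le> j)} \<subseteq> E"
      unfolding E_def by (auto intro: le_trans card_mono)
  qed
  then have "AE \<omega> in P. \<forall>j. \<not> (finite (Xi \<omega>) \<and> card (Xi \<omega>) \<le> j)"
    by (subst AE_all_countable) blast
  then show ?thesis by eventually_elim blast
qed

lemma AE_desc_enumerable: "AE \<omega> in P. desc_enumerable (Xi \<omega>)"
  using AE_finite_atoms_above AE_infinite_atoms AE_space
  by eventually_elim (use atoms_pos in \<open>auto simp: desc_enumerable_def\<close>)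

end

section \<open>Discretisation on a geometric grid\<close>

lemma geometric_bucket_exists:
  fixes q c x :: real
  assumes q: "0 < q" "q < 1" and c: "c > 0" and x: "0 < x" "x \<le> c"
  shows "\<exists>k. c * q^k \<le> x \<and> x < c * q^k / q"
proof -
  obtain n where n: "q^n < x / c" using real_arch_pow_inv[of "x/c" q] q x c by auto
  then have ex: "\<exists>k. c * q^k \<le> x" using c by (intro exI[of _ n]) (simp add: field_simps)
  define k where "k = (LEAST k. c * q^k \<le> x)"
  have k: "c * q^k \<le> x" unfolding k_def by (rule LeastI_ex[OF ex])
  have "x < c * q^k / q"
  proof (cases k)
    case 0
    have "q * x < 1 * x" using x q by (intro mult_strict_right_mono) auto
    then have "q * x < c" using x by linarith
    then show ?thesis using 0 q by (simp add: field_simps)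
  next
    case (Suc k')
    then have "\<not> c * q^k' \<le> x" using not_less_Least[of k' "\<lambda>k. c * q^k \<le> x"] unfolding k_def by auto
    then show ?thesis using Suc q by simp
  qed
  then show ?thesis using k by blast
qed

definition grid_sum :: "real \<Rightarrow> real \<Rightarrow> real \<Rightarrow> real set \<Rightarrow> ennreal" where
  "grid_sum e c q X =
     (\<Sum>k. ennreal ((c * q^k / q) powr e) * ennreal (real (card (X \<inter> {c * q^k ..< c * q^k / q}))))"

lemma sum_desc_atoms_le_grid_sum:
  assumes X: "desc_enumerable X" and q: "0 < q" "q < 1" and c: "c > 0" and e: "e > 0"
  shows "ennreal (\<Sum>j=1..m. desc_atom X j powr e * indicator {..c} (desc_atom X j))
    \<le> grid_sum e c q X"
proof -
  define I where "I k = {c * q^k ..< c * q^k / q}" for k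
  define v where "v k = (c * q^k / q) powr e" for k
  define f where "f x = x powr e * indicator {..c} x" for x :: real
  define W where "W = desc_atom X ` {1..m}"
  have inj: "inj_on (desc_atom X) {1..m}" using inj_on_desc_atom[OF X] by (rule inj_on_subset) auto
  have WX: "W \<subseteq> X" unfolding W_def using desc_atom_in_rank(1)[OF X] by auto
  have "ennreal (f x) \<le> (\<Sum>k. ennreal (v k) * indicator (I k) x)" if x: "x > 0" for x
  proof (cases "x \<le> c")
    case True
    then obtain k where k: "c * q^k \<le> x" "x < c * q^k / q"
      using geometric_bucket_exists[OF q c x] by blast
    then have "ennreal (f x) \<le> ennreal (v k) * indicator (I k) x"
      using True x e by (auto simp: f_def v_def I_def intro!: ennreal_leI powr_mono2)
    also have "\<dots> \<le> (\<Sum>k. ennreal (v k) * indicator (I k) x)"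
      using sum_le_suminf[OF summableI, of "{k}" "\<lambda>k. ennreal (v k) * indicator (I k) x"]
      by (simp only: sum.insert[OF finite.emptyI empty_iff[THEN iffD1, THEN notI]] sum.empty
          add_0_right) simp
    finally show ?thesis .
  qed (simp add: f_def)
  then have "(\<Sum>x\<in>W. ennreal (f x)) \<le> (\<Sum>x\<in>W. \<Sum>k. ennreal (v k) * indicator (I k) x)"
    using WX X by (intro sum_mono) (auto simp: desc_enumerable_def)
  moreover have "(\<Sum>x\<in>W. ennreal (f x))
      = ennreal (\<Sum>j=1..m. desc_atom X j powr e * indicator {..c} (desc_atom X j))"
    unfolding W_def sum.reindex[OF inj] by (simp add: f_def sum_ennreal)
  ultimately have "ennreal (\<Sum>j=1..m. desc_atom X j powr e * indicator {..c} (desc_atom X j))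
      \<le> (\<Sum>x\<in>W. \<Sum>k. ennreal (v k) * indicator (I k) x)" by simp
  also have "\<dots> = (\<Sum>k. ennreal (v k) * of_nat (card (W \<inter> I k)))"
    unfolding suminf_sum[symmetric, OF summableI]
    by (simp add: sum_distrib_left[symmetric] W_def Int_commute indicator_def sum.If_cases)
  also have "\<dots> \<le> (\<Sum>k. ennreal (v k) * of_nat (card (X \<inter> I k)))"
  proof (intro suminf_le mult_left_mono summableI)
    fix k
    have "c * q^k > 0" using c q by simp
    then have "finite {x\<in>X. c * q^k \<le> x}" using X unfolding desc_enumerable_def by blast
    then have "finite (X \<inter> I k)" by (rule finite_subset[rotated]) (auto simp: I_def)
    then show "of_nat (card (W \<inter> I k)) \<le> (of_nat (card (X \<inter> I k)) :: ennreal)"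
      using WX by (intro of_nat_mono card_mono) auto
  qed auto
  finally show ?thesis by (simp add: grid_sum_def v_def I_def ennreal_of_nat_eq_real_of_nat)
qed

lemma geometric_bucket_weight:
  fixes c q A :: real and k :: nat
  assumes c: "c > 0" and q: "0 < q" "q < 1"
  shows "(c * q^k / q) powr (A + 1) * (1 / (c * q^k) - 1 / (c * q^k / q))
       = (1 - q) * q powr (-(A+1)) * c powr A * (q powr A)^k"
proof -
  define x where "x = c * q^k"
  have x: "x > 0" unfolding x_def using c q by simp
  have shift: "(x / q) powr (A + 1) = x powr (A+1) * q powr (-(A+1))"
  proof -
    have "(x/q) powr (A+1) = x powr (A+1) / q powr (A+1)" using x q by (auto intro: powr_divide)
    also have "\<dots> = x powr (A+1) * q powr (-(A+1))" by (simp only: powr_minus divide_inverse)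
    finally show ?thesis .
  qed
  have split: "x powr (A+1) = x powr A * x" using x by (simp add: powr_add)
  have scale: "x powr A = c powr A * (q powr A)^k"
  proof -
    have "x powr A = c powr A * (q^k) powr A" unfolding x_def using c q by (simp add: powr_mult)
    also have "(q^k) powr A = (q powr A)^k"
      using q by (simp add: powr_realpow[symmetric] powr_powr mult.commute powr_power)
    finally show ?thesis .
  qed
  have "(x / q) powr (A + 1) * (1 / x - 1 / (x / q)) = x powr A * x * q powr (-(A+1)) * ((1 - q) / x)"
    unfolding shift split using x q by (simp add: field_simps)
  also have "\<dots> = (1 - q) * q powr (-(A+1)) * x powr A" using x by (simp add: field_simps)
  finally have "(x / q) powr (A + 1) * (1 / x - 1 / (x / q)) = (1 - q) * q powr (-(A+1)) * (c powr A * (q powr A)^k)"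
    unfolding scale .
  then show ?thesis unfolding x_def by (simp add: mult.assoc)
qed

definition grid_factor :: "real \<Rightarrow> real \<Rightarrow> real" where
  "grid_factor q A = (1 - q) * q powr (-(A+1)) / (1 - q powr A)"

lemma grid_factor_nonneg:
  fixes q A :: real
  assumes "0 < q" "q < 1" "A > 0"
  shows "grid_factor q A \<ge> 0"
proof -
  have "q powr A < 1" using powr_less_mono2[OF assms(3), of q 1] assms by simp
  then show ?thesis using assms by (simp add: grid_factor_def)
qed

context inv_sq_poisson_process
begin

lemma borel_measurable_grid_sum [measurable]:
  assumes "c > 0" "0 < q" "q < 1"
  shows "(\<lambda>\<omega>. grid_sum e c q (Xi \<omega>)) \<in> borel_measurable P"
proof -
  have B: "finite_intensity_set {c * q^k ..< c * q^k / q}" for k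
    using assms by (intro finite_intensity_set_atLeastLessThan) (auto simp: field_simps)
  show ?thesis
    unfolding grid_sum_def
    by (intro borel_measurable_suminf_order borel_measurable_times_ennreal borel_measurable_const
        measurable_compose[OF borel_measurable_count_atoms[OF B] measurable_ennreal])

qed

text \<open>A Riemann sum for Campbell's formula
  \<open>E (\<Sum>x\<in>Xi, x \<le> c. x powr (A + 1)) = \<integral>\<^sub>0\<^sup>c x powr (A + 1) / x\<^sup>2 dx = c powr A / A\<close>.\<close>
lemma expected_grid_sum:
  assumes c: "c > 0" and q: "0 < q" "q < 1" and A: "A > 0"
  shows "(\<integral>\<^sup>+\<omega>. grid_sum (A + 1) c q (Xi \<omega>) \<partial>P) = ennreal (grid_factor q A * c powr A)"
proof -
  have le: "c * q^k \<le> c * q^k / q" and pos: "c * q^k > 0" for k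
    using c q by (auto simp: field_simps)
  note B = finite_intensity_set_atLeastLessThan[OF pos le]
  have M: "(\<lambda>\<omega>. ennreal (real (card (Xi \<omega> \<inter> {c * q^k ..< c * q^k / q})))) \<in> borel_measurable P"
    for k by (rule measurable_compose[OF borel_measurable_count_atoms[OF B] measurable_ennreal])
  have "(\<integral>\<^sup>+\<omega>. grid_sum (A + 1) c q (Xi \<omega>) \<partial>P)
     = (\<Sum>k. \<integral>\<^sup>+\<omega>. ennreal ((c * q^k / q) powr (A+1)) *
          ennreal (real (card (Xi \<omega> \<inter> {c * q^k ..< c * q^k / q}))) \<partial>P)"
    unfolding grid_sum_def
    by (rule nn_integral_suminf) (rule borel_measurable_times_ennreal[OF borel_measurable_const M])
  also have "\<dots> = (\<Sum>k. ennreal ((c * q^k / q) powr (A+1)) *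
          (\<integral>\<^sup>+\<omega>. ennreal (real (card (Xi \<omega> \<inter> {c * q^k ..< c * q^k / q}))) \<partial>P))"
    by (simp only: nn_integral_cmult[OF M])
  also have "\<dots> = (\<Sum>k. ennreal ((c * q^k / q) powr (A+1)) * ennreal (1 / (c * q^k) - 1 / (c * q^k / q)))"
    unfolding expected_count_atoms[OF B] emeasure_inv_sq_intensity_atLeastLessThan[OF pos le] ..
  also have "\<dots> = (\<Sum>k. ennreal ((1 - q) * q powr (-(A+1)) * c powr A * (q powr A)^k))"
  proof (rule suminf_cong)
    fix k
    have "1 / (c * q^k / q) \<le> 1 / (c * q^k)" using pos[of k] q by (simp add: divide_le_cancel)
    then have "ennreal ((c * q^k / q) powr (A+1)) * ennreal (1 / (c * q^k) - 1 / (c * q^k / q))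
        = ennreal ((c * q^k / q) powr (A+1) * (1 / (c * q^k) - 1 / (c * q^k / q)))"
      by (intro ennreal_mult[symmetric]) auto
    then show "ennreal ((c * q^k / q) powr (A+1)) * ennreal (1 / (c * q^k) - 1 / (c * q^k / q))
        = ennreal ((1 - q) * q powr (-(A+1)) * c powr A * (q powr A)^k)"
      unfolding geometric_bucket_weight[OF c q] .
  qed
  also have "\<dots> = ennreal ((1 - q) * q powr (-(A+1)) * c powr A / (1 - q powr A))"
  proof (rule suminf_ennreal_eq)
    show "0 \<le> (1 - q) * q powr (-(A+1)) * c powr A * (q powr A)^k" for k using q by simp
    have "q powr A < 1" using powr_less_mono2[OF A, of q 1] q by simp
    then have "(\<lambda>k. (q powr A)^k) sums (1 / (1 - q powr A))" by (intro geometric_sums) simp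
    from sums_mult[OF this, of "(1 - q) * q powr (-(A+1)) * c powr A"]
    show "(\<lambda>k. (1 - q) * q powr (-(A+1)) * c powr A * (q powr A)^k)
        sums ((1 - q) * q powr (-(A+1)) * c powr A / (1 - q powr A))" by simp
  qed
  also have "\<dots> = ennreal (grid_factor q A * c powr A)" by (simp add: grid_factor_def)
  finally show ?thesis .
qed

end

section \<open>Lower bounds for the residual weight\<close>

text \<open>Removed indices at or beyond \<open>N\<close> are outnumbered by the indices below \<open>N\<close> that were not
  removed, and each of these carries at least as much weight.\<close>
lemma sum_tail_le_sum_Diff:
  fixes p :: "nat \<Rightarrow> real"
  assumes anti: "\<And>i j. 1 \<le> i \<Longrightarrow> i \<le> j \<Longrightarrow> j \<le> m \<Longrightarrow> p j \<le> p i"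
    and nn: "\<And>j. j \<in> {1..m} \<Longrightarrow> p j \<ge> 0"
    and D: "D \<subseteq> {1..m}" "card D < N"
  shows "sum p {N..m} \<le> sum p ({1..m} - D)"
proof (cases "N \<le> m")
  case False
  then have "{N..m} = {}" by auto
  then show ?thesis using nn by (auto intro!: sum_nonneg)
next
  case True
  have N1: "N \<ge> 1" using D by simp
  define U where "U = {N..m}"
  define V where "V = {1..<N}"
  have fD: "finite D" using D finite_subset by blast
  have UV: "{1..m} = V \<union> U" "V \<inter> U = {}" unfolding U_def V_def using N1 True by auto
  have s1: "sum p ({1..m} - D) = sum p (V - D) + sum p (U - D)"
    unfolding UV(1) Un_Diff using UV(2) by (intro sum.union_disjoint) (auto simp: U_def V_def)
  have s2: "sum p U = sum p (U - D) + sum p (U \<inter> D)"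
  proof -
    have "sum p U = sum p ((U-D) \<union> (U\<inter>D))" by (simp add: Un_Diff_Int)
    also have "\<dots> = sum p (U-D) + sum p (U\<inter>D)" by (intro sum.union_disjoint) (auto simp: U_def)
    finally show ?thesis .
  qed
  have pN: "p N \<ge> 0" using nn N1 True by auto
  have b1: "sum p (U \<inter> D) \<le> real (card (U \<inter> D)) * p N"
    using sum_bounded_above[of "U \<inter> D" p "p N"] anti N1 unfolding U_def by auto
  have b2: "real (card (V - D)) * p N \<le> sum p (V - D)"
    using sum_bounded_below[of "V - D" "p N" p] anti True unfolding V_def by auto
  have cD: "card D = card (V \<inter> D) + card (U \<inter> D)"
  proof -
    have "D = (V \<inter> D) \<union> (U \<inter> D)" using D UV by auto
    then have "card D = card ((V \<inter> D) \<union> (U \<inter> D))" by simp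
    also have "\<dots> = card (V \<inter> D) + card (U \<inter> D)"
      using UV(2) fD by (intro card_Un_disjoint) auto
    finally show ?thesis .
  qed
  have cV: "card (V - D) = card V - card (V \<inter> D)"
    by (rule card_Diff_subset_Int) (simp add: V_def)
  have "card V = N - 1" unfolding V_def by simp
  then have "card (U \<inter> D) \<le> card (V - D)" using cV cD D by linarith
  then have "real (card (U \<inter> D)) * p N \<le> real (card (V - D)) * p N" using pN by (intro mult_right_mono) auto
  then show ?thesis using s1 s2 b1 b2 unfolding U_def by linarith
qed

lemma sum_blocks_le:
  fixes n :: "nat \<Rightarrow> nat" and p y :: "nat \<Rightarrow> real"
  assumes n: "mono n"
    and low: "\<And>s j. 2 \<le> s \<Longrightarrow> s \<le> K \<Longrightarrow> n (s-1) < j \<Longrightarrow> j \<le> n s \<Longrightarrow> y s \<le> p j"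
  shows "r \<le> K \<Longrightarrow> (\<Sum>s=2..r. real (n s - n (s-1)) * y s) \<le> sum p {n 1<..n r}"
proof (induction r)
  case (Suc r)
  show ?case
  proof (cases "r = 0")
    case False
    have "{n 1<..n (Suc r)} = {n 1<..n r} \<union> {n r<..n (Suc r)}"
      using monoD[OF n, of 1 r] monoD[OF n, of r "Suc r"] False by auto
    then have "sum p {n 1<..n (Suc r)} = sum p {n 1<..n r} + sum p {n r<..n (Suc r)}"
      by (simp add: sum.union_disjoint)
    moreover have "real (n (Suc r) - n r) * y (Suc r) \<le> sum p {n r<..n (Suc r)}"
      using sum_bounded_below[of "{n r<..n (Suc r)}" "y (Suc r)" p] low[of "Suc r"] Suc.prems False
      by auto
    moreover have "{2..Suc r} = insert (Suc r) {2..r}" using False by auto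
    ultimately show ?thesis using Suc by simp
  qed simp
qed (use monoD[OF n, of 0 1] in simp)

text \<open>Lower bound for the weight left after fewer than \<open>N \<le> n 1 + 1\<close> removals, on the event
  that for each block \<open>s\<close> more than \<open>n s\<close> atoms exceed \<open>\<rho> / n s\<close>: then the atoms with index in
  \<open>{n (s-1)<..n s}\<close> all exceed \<open>\<rho> / n s\<close>.\<close>
definition block_weight :: "real \<Rightarrow> real \<Rightarrow> (nat \<Rightarrow> nat) \<Rightarrow> nat \<Rightarrow> real" where
  "block_weight \<beta> \<rho> n K = (\<Sum>s=2..K. real (n s - n (s-1)) * (\<rho> / real (n s)) powr \<beta>)"

lemma residual_weight_ge_block_weight:
  fixes n :: "nat \<Rightarrow> nat"
  assumes \<beta>: "0 < \<beta>" and \<rho>: "0 < \<rho>" and X: "desc_enumerable X"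
    and n: "mono n" "n K = m" "N \<le> n 1 + 1" "\<And>s. 2 \<le> s \<Longrightarrow> s \<le> K \<Longrightarrow> n s > 0"
    and many: "\<And>s. 2 \<le> s \<Longrightarrow> s \<le> K \<Longrightarrow> n s < card (X \<inter> {\<rho> / real (n s)..})"
    and D: "D \<subseteq> {1..m}" "card D < N"
  shows "block_weight \<beta> \<rho> n K \<le> (\<Sum>j\<in>{1..m} - D. desc_atom X j powr \<beta>)"
proof -
  let ?p = "\<lambda>j. desc_atom X j powr \<beta>"
  have anti: "?p j \<le> ?p i" if "1 \<le> i" "i \<le> j" "j \<le> m" for i j
    using desc_atom_antimono[OF X that(1,2)] desc_atom_pos[OF X, of j] that \<beta>
    by (intro powr_mono2) auto
  have "sum ?p {n 1<..m} \<le> sum ?p {N..m}"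
    using n(3) by (intro sum_mono2) auto
  also have "\<dots> \<le> sum ?p ({1..m} - D)" by (rule sum_tail_le_sum_Diff[OF anti _ D]) auto
  finally have tail: "sum ?p {n 1<..m} \<le> sum ?p ({1..m} - D)" .
  have low: "(\<rho> / real (n s)) powr \<beta> \<le> ?p j"
    if s: "2 \<le> s" "s \<le> K" and j: "n (s-1) < j" "j \<le> n s" for s j
  proof -
    have ns: "n s \<ge> 1" using n(4)[OF s] by simp
    have pos: "\<rho> / real (n s) > 0" using \<rho> ns by simp
    have "{x\<in>X. \<rho> / real (n s) \<le> x} = X \<inter> {\<rho> / real (n s)..}" by auto
    then have "card {x\<in>X. \<rho> / real (n s) \<le> x} \<ge> n s" using many[OF s] by simp
    then have "\<rho> / real (n s) \<le> desc_atom X (n s)" by (intro desc_atom_ge_if_card[OF X ns pos])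
    also have "\<dots> \<le> desc_atom X j" using j by (intro desc_atom_antimono[OF X]) auto
    finally show ?thesis using pos \<beta> by (intro powr_mono2) auto
  qed
  have "block_weight \<beta> \<rho> n K \<le> sum ?p {n 1<..n K}"
    unfolding block_weight_def by (rule sum_blocks_le[OF n(1) low]) auto
  then show ?thesis using tail n(2) by simp
qed

lemma powr_Suc_diff_le:
  fixes \<beta> r :: real
  assumes \<beta>: "0 < \<beta>" "\<beta> < 1" and r: "r \<ge> 1"
  shows "(r+1) powr (1-\<beta>) - r powr (1-\<beta>) \<le> (1-\<beta>) * r powr (-\<beta>)"
proof -
  have "\<exists>z. r < z \<and> z < r+1 \<and> (r+1) powr (1-\<beta>) - r powr (1-\<beta>) = ((r+1) - r) * ((1-\<beta>) * z powr (1-\<beta>-1))"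
    by (rule MVT2) (use r in \<open>auto intro!: derivative_eq_intros\<close>)
  then obtain z where z: "r < z" "(r+1) powr (1-\<beta>) - r powr (1-\<beta>) = (1-\<beta>) * z powr (-\<beta>)" by auto
  have "z powr (-\<beta>) \<le> r powr (-\<beta>)" using z r \<beta> by (intro powr_mono2') auto
  then show ?thesis using z \<beta> by (simp add: mult_left_mono)
qed

lemma sum_powr_neg_ge:
  fixes \<beta> :: real
  assumes \<beta>: "0 < \<beta>" "\<beta> < 1"
  shows "K \<ge> 1 \<Longrightarrow> ((real K + 1) powr (1-\<beta>) - 2 powr (1-\<beta>)) / (1-\<beta>) \<le> (\<Sum>r=2..K. real r powr (-\<beta>))"
proof (induction K)
  case 0 then show ?case by simp
next
  case (Suc K)
  show ?case
  proof (cases "K = 0")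
    case True then show ?thesis by simp
  next
    case False
    have IH: "((real K + 1) powr (1-\<beta>) - 2 powr (1-\<beta>)) / (1-\<beta>) \<le> (\<Sum>r=2..K. real r powr (-\<beta>))"
      using Suc False by simp
    have st: "(real (Suc K) + 1) powr (1-\<beta>) - real (Suc K) powr (1-\<beta>) \<le> (1-\<beta>) * real (Suc K) powr (-\<beta>)"
      using powr_Suc_diff_le[OF \<beta>, of "real (Suc K)"] by simp
    have "{2..Suc K} = insert (Suc K) {2..K}" using False by auto
    then have sum: "(\<Sum>r=2..Suc K. real r powr (-\<beta>)) = real (Suc K) powr (-\<beta>) + (\<Sum>r=2..K. real r powr (-\<beta>))"
      by simp
    have "((real (Suc K) + 1) powr (1-\<beta>) - 2 powr (1-\<beta>)) / (1-\<beta>)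
       = ((real (Suc K) + 1) powr (1-\<beta>) - real (Suc K) powr (1-\<beta>)) / (1-\<beta>) + ((real K + 1) powr (1-\<beta>) - 2 powr (1-\<beta>)) / (1-\<beta>)"
      by (simp add: diff_divide_distrib add.commute)
    also have "\<dots> \<le> real (Suc K) powr (-\<beta>) + (\<Sum>r=2..K. real r powr (-\<beta>))"
      using st IH \<beta> by (intro add_mono) (auto simp: divide_le_eq mult.commute)
    finally show ?thesis unfolding sum .
  qed
qed

definition block_end :: "nat \<Rightarrow> nat \<Rightarrow> nat \<Rightarrow> nat" where
  "block_end m K r = nat \<lfloor>real m * real r / real K\<rfloor>"

lemma block_end_le: "real (block_end m K r) \<le> real m * real r / real K"
proof -
  have "real m * real r / real K \<ge> 0" by simp
  then show ?thesis unfolding block_end_def by (simp add: of_nat_nat)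
qed

lemma block_end_gt: "real (block_end m K r) > real m * real r / real K - 1"
proof -
  have nn: "real m * real r / real K \<ge> 0" by simp
  then have "\<lfloor>real m * real r / real K\<rfloor> \<ge> 0" by simp
  then have "real (block_end m K r) = real_of_int \<lfloor>real m * real r / real K\<rfloor>" unfolding block_end_def by simp
  then show ?thesis by linarith
qed

lemma block_end_K: "K \<ge> 1 \<Longrightarrow> block_end m K K = m"
  unfolding block_end_def by simp

lemma mono_block_end: "mono (block_end m K)"
  unfolding block_end_def
  by (intro monoI nat_mono floor_mono divide_right_mono mult_left_mono) auto

lemma block_end_diff_ge:
  fixes m K s :: nat and \<rho> :: real
  assumes mK: "real m * (1 - \<rho>) \<ge> real K" and K: "K > 0" and s: "s \<ge> 1"
  shows "\<rho> * m / K \<le> real (block_end m K s - block_end m K (s-1))"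
proof -
  have "block_end m K (s-1) \<le> block_end m K s" by (rule monoD[OF mono_block_end]) simp
  then have "real (block_end m K s - block_end m K (s-1)) = real (block_end m K s) - real (block_end m K (s-1))"
    by (simp add: of_nat_diff)
  also have "\<dots> \<ge> (real m * real s / real K - 1) - real m * real (s-1) / real K"
    using block_end_gt[of m s K] block_end_le[of m K "s-1"] by linarith
  also have "(real m * real s / real K - 1) - real m * real (s-1) / real K = real m / real K - 1"
    using s K by (simp add: of_nat_diff field_simps)
  also have "real m / real K - 1 \<ge> \<rho> * m / K"
    using mK K by (simp add: field_simps)
  finally show ?thesis .
qed

lemma block_weight_block_end_ge:
  fixes m K :: nat and \<beta> \<rho> :: real
  assumes \<beta>: "0 < \<beta>" and \<rho>: "0 < \<rho>" and K: "K \<ge> 2" and mK: "real m * (1 - \<rho>) \<ge> real K"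
  shows "\<rho> * (\<rho> * K) powr \<beta> * (\<Sum>r=2..K. real r powr (-\<beta>)) * m powr (1 - \<beta>) / K
    \<le> block_weight \<beta> \<rho> (block_end m K) K"
proof -
  have K0: "real K > 0" using K by simp
  with mK have "real m * (1 - \<rho>) > 0" by linarith
  then have m: "real m > 0" by (simp add: zero_less_mult_iff)
  have split: "(\<rho> * K / m) powr \<beta> * real s powr (-\<beta>) = (\<rho> * K / (m * s)) powr \<beta>" if "s \<ge> 2" for s
  proof -
    have "(\<rho> * K / (m * s)) powr \<beta> = (\<rho> * K / m) powr \<beta> / real s powr \<beta>"
      using \<rho> K0 m that by (simp add: powr_divide[symmetric])
    then show ?thesis by (simp add: powr_minus divide_inverse)
  qed
  have bound: "\<rho> * m / K * (\<rho> * K / (m * s)) powr \<beta>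
      \<le> real (block_end m K s - block_end m K (s-1)) * (\<rho> / real (block_end m K s)) powr \<beta>"
    if s: "2 \<le> s" "s \<le> K" for s
  proof -
    have d: "\<rho> * m / K \<le> real (block_end m K s - block_end m K (s-1))"
      using block_end_diff_ge[OF mK] K s by simp
    have pos: "\<rho> * m / K > 0" using \<rho> m K0 by simp
    have np: "real (block_end m K s) > 0" using d pos by linarith
    have "real (block_end m K s) * real K \<le> real m * real s"
      using block_end_le[of m K s] K0 by (simp add: field_simps)
    then have "\<rho> * K / (m * s) \<le> \<rho> / real (block_end m K s)"
      using np \<rho> m s K0 by (simp add: field_simps mult_left_mono)
    then have "(\<rho> * K / (m * s)) powr \<beta> \<le> (\<rho> / real (block_end m K s)) powr \<beta>"
      using \<rho> \<beta> K0 m s by (intro powr_mono2) auto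
    with d pos show ?thesis by (intro mult_mono) auto
  qed
  have "\<rho> * (\<rho> * K) powr \<beta> * (\<Sum>r=2..K. real r powr (-\<beta>)) * m powr (1 - \<beta>) / K
      = \<rho> * m / K * (\<rho> * K / m) powr \<beta> * (\<Sum>r=2..K. real r powr (-\<beta>))"
    using \<rho> m by (simp add: powr_divide powr_diff field_simps)
  also have "\<dots> = (\<Sum>s=2..K. \<rho> * m / K * (\<rho> * K / (m * s)) powr \<beta>)"
    by (simp add: sum_distrib_left split mult.assoc)
  also have "\<dots> \<le> block_weight \<beta> \<rho> (block_end m K) K"
    unfolding block_weight_def by (intro sum_mono bound) auto
  finally show ?thesis .
qed

lemma powr_weight_eq:
  fixes x :: real
  assumes "x > 0"
  shows "x powr \<beta> * (x powr a * indicator {..c} x) = x powr (a + \<beta>) * indicator {..c} x"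
  using assms by (simp add: powr_add)

context biased_sampler
begin

lemma desc_atoms_le_sup:
  assumes X: "desc_enumerable X" and "a > 0" "c > 0"
  shows "E (desc_atom X) m N (\<lambda>x. x powr a * indicator {..c} x) \<le> N * c powr a"
proof (rule le_sup)
  show "\<And>j. j \<in> {1..m} \<Longrightarrow> 0 < desc_atom X j" using desc_atom_pos[OF X] by auto
  show "x powr a * indicator {..c} x \<le> c powr a" if "x > 0" for x
    using that assms by (auto simp: indicator_def intro: powr_mono2)
qed simp

lemma desc_atoms_le_grid_sum:
  fixes n :: "nat \<Rightarrow> nat"
  assumes \<beta>: "0 < \<beta>" and X: "desc_enumerable X" and a: "a > 0" and c: "c > 0"
    and q: "0 < q" "q < 1" and \<rho>: "0 < \<rho>" and N: "0 < N"
    and n: "mono n" "n K = m" "N \<le> n 1 + 1" "\<And>s. 2 \<le> s \<Longrightarrow> s \<le> K \<Longrightarrow> n s > 0"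
    and L: "block_weight \<beta> \<rho> n K > 0"
    and many: "\<And>s. 2 \<le> s \<Longrightarrow> s \<le> K \<Longrightarrow> n s < card (X \<inter> {\<rho> / real (n s)..})"
  shows "ennreal (E (desc_atom X) m N (\<lambda>x. x powr a * indicator {..c} x))
    \<le> ennreal (N / block_weight \<beta> \<rho> n K) * grid_sum (a + \<beta>) c q X"
proof -
  let ?L = "block_weight \<beta> \<rho> n K"
  let ?S = "\<Sum>j=1..m. desc_atom X j powr (a + \<beta>) * indicator {..c} (desc_atom X j)"
  have pos: "\<And>j. j \<in> {1..m} \<Longrightarrow> 0 < desc_atom X j" using desc_atom_pos[OF X] by auto
  have "E (desc_atom X) m N (\<lambda>x. x powr a * indicator {..c} x)
      \<le> N * (\<Sum>j=1..m. desc_atom X j powr \<beta> * (desc_atom X j powr a * indicator {..c} (desc_atom X j))) / ?L"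
    by (rule le_residual[OF pos _ L N residual_weight_ge_block_weight[OF \<beta> \<rho> X n many]])
      (auto simp: indicator_def)
  also have "\<dots> = N / ?L * ?S" using pos by (simp add: powr_weight_eq)
  finally have "ennreal (E (desc_atom X) m N (\<lambda>x. x powr a * indicator {..c} x)) \<le> ennreal (N / ?L) * ennreal ?S"
    using L by (simp add: ennreal_mult'[symmetric] ennreal_leI)
  also have "\<dots> \<le> ennreal (N / ?L) * grid_sum (a + \<beta>) c q X"
    using sum_desc_atoms_le_grid_sum[OF X q c] a \<beta> by (intro mult_left_mono) auto
  finally show ?thesis .
qed

end

context inv_sq_poisson_process
begin

definition thin_block_event :: "real \<Rightarrow> (nat \<Rightarrow> nat) \<Rightarrow> nat \<Rightarrow> 'a set" where
  "thin_block_event \<rho> n K = (\<Union>s\<in>{2..K}. {\<omega>\<in>space P. card (Xi \<omega> \<inter> {\<rho> / real (n s)..}) \<le> n s})"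

lemma thin_block_event:
  fixes n :: "nat \<Rightarrow> nat"
  assumes \<rho>: "0 < \<rho>" "\<rho> < 1" and n: "\<And>s. 2 \<le> s \<Longrightarrow> s \<le> K \<Longrightarrow> n s > 0"
  shows "thin_block_event \<rho> n K \<in> sets P"
    "prob (thin_block_event \<rho> n K) \<le> (\<Sum>s=2..K. 1 / (real (n s) * poisson_rate \<rho>))"
proof -
  have B: "finite_intensity_set {\<rho> / real (n s)..}" if "s \<in> {2..K}" for s
    using n that \<rho> by (intro finite_intensity_set_atLeast) auto
  show "thin_block_event \<rho> n K \<in> sets P"
    unfolding thin_block_event_def using count_atoms_sets(2)[OF B] by auto
  have "prob (thin_block_event \<rho> n K)
      \<le> (\<Sum>s=2..K. prob {\<omega>\<in>space P. card (Xi \<omega> \<inter> {\<rho> / real (n s)..}) \<le> n s})"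
    unfolding thin_block_event_def
    by (rule finite_measure_subadditive_finite) (use count_atoms_sets(2)[OF B] in auto)
  also have "\<dots> \<le> (\<Sum>s=2..K. 1 / (real (n s) * poisson_rate \<rho>))"
    using n by (intro sum_mono prob_few_atoms_above \<rho>) auto
  finally show "prob (thin_block_event \<rho> n K) \<le> (\<Sum>s=2..K. 1 / (real (n s) * poisson_rate \<rho>))" .
qed

lemma AE_biased_sampler_le:
  fixes n :: "nat \<Rightarrow> nat"
  assumes E: "biased_sampler \<beta> E" and \<beta>: "0 < \<beta>" and a: "a > 0" and c: "c > 0"
    and q: "0 < q" "q < 1" and \<rho>: "0 < \<rho>" and N: "0 < N"
    and n: "mono n" "n K = m" "N \<le> n 1 + 1" "\<And>s. 2 \<le> s \<Longrightarrow> s \<le> K \<Longrightarrow> n s > 0"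
    and L: "block_weight \<beta> \<rho> n K > 0"
  shows "AE \<omega> in P. ennreal (E (desc_atom (Xi \<omega>)) m N (\<lambda>x. x powr a * indicator {..c} x))
    \<le> ennreal (N / block_weight \<beta> \<rho> n K) * grid_sum (a + \<beta>) c q (Xi \<omega>)
      + ennreal (N * c powr a) * indicator (thin_block_event \<rho> n K) \<omega>"
  using AE_desc_enumerable AE_space
proof eventually_elim
  case (elim \<omega>)
  show ?case
  proof (cases "\<omega> \<in> thin_block_event \<rho> n K")
    case True
    have "ennreal (E (desc_atom (Xi \<omega>)) m N (\<lambda>x. x powr a * indicator {..c} x)) \<le> ennreal (N * c powr a)"
      using biased_sampler.desc_atoms_le_sup[OF E elim(1) a c] by (rule ennreal_leI)
    with True show ?thesis by (intro add_increasing) auto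
  next
    case False
    have "n s < card (Xi \<omega> \<inter> {\<rho> / real (n s)..})" if "2 \<le> s" "s \<le> K" for s
      using False elim(2) that unfolding thin_block_event_def by (simp add: not_le)
    with False show ?thesis
      using biased_sampler.desc_atoms_le_grid_sum[OF E \<beta> elim(1) a c q \<rho> N n L] by simp
  qed
qed

text \<open>Outside the event that some block is thin, the residual weight is at least the block
  weight and the grid sum controls the numerator; on that event only the trivial bound is
  used.\<close>
lemma expected_biased_sampler_le:
  fixes n :: "nat \<Rightarrow> nat"
  assumes E: "biased_sampler \<beta> E" and \<beta>: "0 < \<beta>" and a: "a > 0" and A: "a + \<beta> - 1 > 0"
    and c: "c > 0" and \<rho>: "0 < \<rho>" "\<rho> < 1" and q: "0 < q" "q < 1" and N: "0 < N"
    and n: "mono n" "n K = m" "N \<le> n 1 + 1" "\<And>s. 2 \<le> s \<Longrightarrow> s \<le> K \<Longrightarrow> n s > 0"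
    and L: "block_weight \<beta> \<rho> n K > 0"
  shows "(\<integral>\<^sup>+\<omega>. ennreal (E (desc_atom (Xi \<omega>)) m N (\<lambda>x. x powr a * indicator {..c} x)) \<partial>P)
    \<le> ennreal (N / block_weight \<beta> \<rho> n K) * ennreal (grid_factor q (a + \<beta> - 1) * c powr (a + \<beta> - 1))
      + ennreal (N * c powr a) * ennreal (\<Sum>s=2..K. 1 / (real (n s) * poisson_rate \<rho>))"
proof -
  let ?L = "block_weight \<beta> \<rho> n K" and ?T = "thin_block_event \<rho> n K"
  note T = thin_block_event[OF \<rho> n(4)]
  have "(\<integral>\<^sup>+\<omega>. ennreal (E (desc_atom (Xi \<omega>)) m N (\<lambda>x. x powr a * indicator {..c} x)) \<partial>P)
      \<le> (\<integral>\<^sup>+\<omega>. ennreal (N / ?L) * grid_sum (a + \<beta>) c q (Xi \<omega>)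
          + ennreal (N * c powr a) * indicator ?T \<omega> \<partial>P)"
    by (rule nn_integral_mono_AE[OF AE_biased_sampler_le[OF E \<beta> a c q \<rho>(1) N n L]])
  also have "\<dots> = (\<integral>\<^sup>+\<omega>. ennreal (N / ?L) * grid_sum (a + \<beta>) c q (Xi \<omega>) \<partial>P)
      + (\<integral>\<^sup>+\<omega>. ennreal (N * c powr a) * indicator ?T \<omega> \<partial>P)"
    by (intro nn_integral_add borel_measurable_times_ennreal borel_measurable_const
        borel_measurable_grid_sum[OF c q] borel_measurable_indicator T(1))
  also have "\<dots> = ennreal (N / ?L) * ennreal (grid_factor q (a + \<beta> - 1) * c powr (a + \<beta> - 1))
      + ennreal (N * c powr a) * emeasure P ?T"
    using expected_grid_sum[OF c q A]
    by (simp add: nn_integral_cmult[OF borel_measurable_grid_sum[OF c q]]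
        nn_integral_cmult_indicator[OF T(1)])
  also have "emeasure P ?T \<le> ennreal (\<Sum>s=2..K. 1 / (real (n s) * poisson_rate \<rho>))"
    unfolding emeasure_eq_measure using T(2) by (rule ennreal_leI)
  finally show ?thesis by (simp add: mult_left_mono add_left_mono)
qed
end

lemma block_end_facts:
  fixes m K N :: nat and \<rho> :: real
  assumes \<rho>: "0 < \<rho>" "\<rho> < 1" and K: "K \<ge> 2" and N: "N \<ge> 1"
    and m: "real m \<ge> real K * real N + real K / (1 - \<rho>)"
  shows "real m * (1 - \<rho>) \<ge> real K" "real m > 0" "block_end m K K = m" "N \<le> block_end m K 1 + 1"
    "\<And>s. 1 \<le> s \<Longrightarrow> \<rho> * m / K \<le> real (block_end m K s)"
    "\<And>s. 1 \<le> s \<Longrightarrow> 0 < block_end m K s"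
proof -
  have K0: "real K > 0" using K by simp
  have K\<rho>: "real K / (1 - \<rho>) \<ge> 0" using \<rho> by simp
  have "0 \<le> real K * real N" by simp
  then have "real K / (1 - \<rho>) \<le> real m" using m by linarith
  then show mK: "real m * (1 - \<rho>) \<ge> real K" using \<rho> by (simp add: field_simps)
  then have "real m * (1 - \<rho>) > 0" using K0 by linarith
  then show m0: "real m > 0" using \<rho> by (simp add: zero_less_mult_iff)
  show "block_end m K K = m" using K by (simp add: block_end_K)
  have "real m \<ge> real K * real N" using m K\<rho> by linarith
  then have "real m / real K \<ge> real N" using K0 by (simp add: field_simps)
  then show "N \<le> block_end m K 1 + 1" using block_end_gt[of m 1 K] by simp
  show lower: "\<rho> * m / K \<le> real (block_end m K s)" if "1 \<le> s" for s
    using block_end_diff_ge[OF mK, of s] K that by simp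
  have "0 < \<rho> * m / K" using \<rho> m0 K0 by simp
  then show "0 < block_end m K s" if "1 \<le> s" for s using lower[OF that] by linarith
qed

lemma sum_inverse_block_end_le:
  fixes m K N :: nat and \<rho> r :: real
  assumes \<rho>: "0 < \<rho>" "\<rho> < 1" and K: "K \<ge> 2" and N: "N \<ge> 1"
    and m: "real m \<ge> real K * real N + real K / (1 - \<rho>)" and r: "r > 0"
  shows "(\<Sum>s=2..K. 1 / (real (block_end m K s) * r)) \<le> (real K)\<^sup>2 / (\<rho> * m * r)"
proof -
  note n = block_end_facts[OF \<rho> K N m]
  have K0: "real K > 0" using K by simp
  have pos: "\<rho> * m / K > 0" using \<rho> n(2) K0 by simp
  have "(\<Sum>s=2..K. 1 / (real (block_end m K s) * r)) \<le> (\<Sum>s=2..K. real K / (\<rho> * m * r))"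
  proof (intro sum_mono)
    fix s assume "s \<in> {2..K}"
    then have "1 / (real (block_end m K s) * r) \<le> 1 / (\<rho> * m / K * r)"
      using n(5)[of s] pos r by (intro divide_left_mono mult_right_mono mult_pos_pos) auto
    then show "1 / (real (block_end m K s) * r) \<le> real K / (\<rho> * m * r)" using K0 by simp
  qed
  also have "\<dots> \<le> (real K)\<^sup>2 / (\<rho> * m * r)"
    using \<rho> n(2) r by (simp add: power2_eq_square, intro divide_right_mono mult_right_mono) auto
  finally show ?thesis .
qed

lemma scaling_exponent_first:
  fixes x m \<gamma> \<beta> chi b \<delta> A :: real
  assumes x: "x \<ge> 1" and m: "m \<ge> x powr \<gamma>" and \<beta>: "\<beta> < 1" and \<delta>: "\<delta> > 0"
    and chi: "chi * \<beta> = 1 - \<gamma> * (1 - \<beta>)"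
  shows "x powr (- chi * \<beta> + b * A) * x * (\<delta> * x powr (-b)) powr A \<le> \<delta> powr A * m powr (1 - \<beta>)"
proof -
  have "x powr (- chi * \<beta> + b * A) * x * (\<delta> * x powr (-b)) powr A
      = \<delta> powr A * (x powr (- chi * \<beta> + b * A) * x powr 1 * x powr (-b * A))"
    using x \<delta> by (simp add: powr_mult powr_powr)
  also have "x powr (- chi * \<beta> + b * A) * x powr 1 * x powr (-b * A)
      = x powr (- chi * \<beta> + b * A + 1 + (-b * A))"
    by (simp only: powr_add)
  also have "- chi * \<beta> + b * A + 1 + (-b * A) = \<gamma> * (1 - \<beta>)" using chi by simp
  also have "x powr (\<gamma> * (1 - \<beta>)) = (x powr \<gamma>) powr (1 - \<beta>)" by (simp add: powr_powr)
  also have "\<dots> \<le> m powr (1 - \<beta>)" using m x \<beta> by (intro powr_mono2) auto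
  finally show ?thesis using \<delta> by (simp add: mult_left_mono)
qed

lemma scaling_exponent_second:
  fixes x m \<gamma> \<beta> chi a b \<delta> :: real
  assumes x: "x \<ge> 1" and m: "m \<ge> x powr \<gamma>" and \<beta>: "\<beta> < 1" and b: "b \<ge> 0" and \<delta>: "\<delta> > 0"
    and chi: "chi * \<beta> = 1 - \<gamma> * (1 - \<beta>)"
  shows "x powr (- chi * \<beta> + b * (a + \<beta> - 1)) * x * (\<delta> * x powr (-b)) powr a / m
    \<le> \<delta> powr a * x powr (- \<gamma> * \<beta>)"
proof -
  have "x powr \<gamma> > 0" using x by simp
  then have m0: "m > 0" using m by linarith
  have "x powr (- chi * \<beta> + b * (a + \<beta> - 1)) * x * (\<delta> * x powr (-b)) powr a
      = \<delta> powr a * (x powr (- chi * \<beta> + b * (a + \<beta> - 1)) * x powr 1 * x powr (-b * a))"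
    using x \<delta> by (simp add: powr_mult powr_powr)
  also have "x powr (- chi * \<beta> + b * (a + \<beta> - 1)) * x powr 1 * x powr (-b * a)
      = x powr (- chi * \<beta> + b * (a + \<beta> - 1) + 1 + (-b * a))"
    by (simp only: powr_add)
  also have "- chi * \<beta> + b * (a + \<beta> - 1) + 1 + (-b * a) = \<gamma> * (1 - \<beta>) + b * (\<beta> - 1)"
    using chi by (simp add: algebra_simps)
  also have "x powr (\<gamma> * (1 - \<beta>) + b * (\<beta> - 1)) \<le> x powr (\<gamma> * (1 - \<beta>))"
    using x b \<beta> by (intro powr_mono) (auto simp: mult_nonneg_nonpos)
  finally have "x powr (- chi * \<beta> + b * (a + \<beta> - 1)) * x * (\<delta> * x powr (-b)) powr a / m
      \<le> \<delta> powr a * (x powr (\<gamma> * (1 - \<beta>)) / m)"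
    using \<delta> m0 by (simp add: divide_right_mono mult_left_mono)
  also have "x powr (\<gamma> * (1 - \<beta>)) / m \<le> x powr (\<gamma> * (1 - \<beta>)) / x powr \<gamma>"
    using m x m0 by (intro divide_left_mono mult_pos_pos) auto
  also have "\<dots> = x powr (- \<gamma> * \<beta>)" using x by (simp add: powr_diff[symmetric] algebra_simps)
  finally show ?thesis using \<delta> by (simp add: mult_left_mono)
qed

lemma ennreal_mult_add_mult:
  assumes "0 \<le> u" "0 \<le> v" "0 \<le> w" "0 \<le> z"
  shows "ennreal u * ennreal v + ennreal w * ennreal z = ennreal (u * v + w * z)"
  using assms by (simp add: ennreal_mult' ennreal_plus)

lemma normalised_bound_le:
  fixes N m K :: nat and \<gamma> \<beta> chi a b \<delta> A \<rho> S Z r :: real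
  assumes N: "N \<ge> 1" and m: "real m \<ge> real N powr \<gamma>" and \<beta>: "\<beta> < 1" and b: "b \<ge> 0"
    and \<delta>: "\<delta> > 0" and chi: "chi * \<beta> = 1 - \<gamma> * (1 - \<beta>)" and A: "A = a + \<beta> - 1"
    and \<rho>: "\<rho> > 0" and K: "K > 0" and S: "S > 0" and Z: "Z \<ge> 0" and r: "r > 0"
  shows "N powr (- chi * \<beta> + b * A) *
      (N / (\<rho> * (\<rho> * K) powr \<beta> * S * m powr (1 - \<beta>) / K) * (Z * (\<delta> * N powr (-b)) powr A)
        + N * (\<delta> * N powr (-b)) powr a * ((real K)\<^sup>2 / (\<rho> * m * r)))
    \<le> \<delta> powr A * Z * K / (\<rho> * (\<rho> * K) powr \<beta> * S) + \<delta> powr a * (real K)\<^sup>2 / (\<rho> * r) * N powr (- \<gamma> * \<beta>)"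
proof -
  let ?s = "real N powr (- chi * \<beta> + b * A)" and ?c = "\<delta> * N powr (-b)"
  have x: "real N \<ge> 1" using N by simp
  have "real N powr \<gamma> > 0" using x by simp
  then have m0: "real m > 0" using m by linarith
  have "?s * (N / (\<rho> * (\<rho> * K) powr \<beta> * S * m powr (1 - \<beta>) / K) * (Z * ?c powr A)
        + N * ?c powr a * ((real K)\<^sup>2 / (\<rho> * m * r)))
    = Z * K / (\<rho> * (\<rho> * K) powr \<beta> * S) * (?s * N * ?c powr A / m powr (1 - \<beta>))
      + (real K)\<^sup>2 / (\<rho> * r) * (?s * N * ?c powr a / m)"
    using \<rho> m0 S K r by (simp add: field_simps)
  also have "\<dots> \<le> Z * K / (\<rho> * (\<rho> * K) powr \<beta> * S) * \<delta> powr A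
      + (real K)\<^sup>2 / (\<rho> * r) * (\<delta> powr a * N powr (- \<gamma> * \<beta>))"
  proof (intro add_mono mult_left_mono)
    show "?s * N * ?c powr A / m powr (1 - \<beta>) \<le> \<delta> powr A"
      using scaling_exponent_first[OF x m \<beta> \<delta> chi, of b A] m0 by (simp add: divide_le_eq)
    show "?s * N * ?c powr a / m \<le> \<delta> powr a * N powr (- \<gamma> * \<beta>)"
      using scaling_exponent_second[OF x m \<beta> b \<delta> chi, of a] A by simp
  qed (use Z \<rho> S K r in auto)
  also have "\<dots> = \<delta> powr A * Z * K / (\<rho> * (\<rho> * K) powr \<beta> * S)
      + \<delta> powr a * (real K)\<^sup>2 / (\<rho> * r) * N powr (- \<gamma> * \<beta>)"
    by (simp add: mult_ac)
  finally show ?thesis .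
qed

context inv_sq_poisson_process
begin

lemma expected_biased_sampler_block_end_le:
  fixes m K N :: nat and \<beta> a c \<rho> q :: real
  assumes E: "biased_sampler \<beta> E" and \<beta>: "0 < \<beta>" and a: "a > 0" and A: "a + \<beta> - 1 > 0"
    and c: "c > 0" and \<rho>: "0 < \<rho>" "\<rho> < 1" and q: "0 < q" "q < 1" and K: "K \<ge> 2" and N: "N \<ge> 1"
    and m: "real m \<ge> real K * real N + real K / (1 - \<rho>)"
  shows "(\<integral>\<^sup>+\<omega>. ennreal (E (desc_atom (Xi \<omega>)) m N (\<lambda>x. x powr a * indicator {..c} x)) \<partial>P)
    \<le> ennreal (N / (\<rho> * (\<rho> * K) powr \<beta> * (\<Sum>r=2..K. real r powr (-\<beta>)) * m powr (1 - \<beta>) / K))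
        * ennreal (grid_factor q (a + \<beta> - 1) * c powr (a + \<beta> - 1))
      + ennreal (N * c powr a) * ennreal ((real K)\<^sup>2 / (\<rho> * m * poisson_rate \<rho>))"
proof -
  let ?n = "block_end m K"
  let ?Lb = "\<rho> * (\<rho> * K) powr \<beta> * (\<Sum>r=2..K. real r powr (-\<beta>)) * m powr (1 - \<beta>) / K"
  let ?Z = "grid_factor q (a + \<beta> - 1) * c powr (a + \<beta> - 1)"
  note n = block_end_facts[OF \<rho> K N m]
  have "(\<Sum>r=2..K. real r powr (-\<beta>)) > 0" using K by (intro sum_pos) auto
  then have Lb: "?Lb > 0" using \<rho> n(2) K by simp
  have L: "?Lb \<le> block_weight \<beta> \<rho> ?n K" by (rule block_weight_block_end_ge[OF \<beta> \<rho>(1) K n(1)])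
  have "(\<integral>\<^sup>+\<omega>. ennreal (E (desc_atom (Xi \<omega>)) m N (\<lambda>x. x powr a * indicator {..c} x)) \<partial>P)
    \<le> ennreal (N / block_weight \<beta> \<rho> ?n K) * ennreal ?Z
      + ennreal (N * c powr a) * ennreal (\<Sum>s=2..K. 1 / (real (?n s) * poisson_rate \<rho>))"
    by (rule expected_biased_sampler_le[OF E \<beta> a A c \<rho> q _ mono_block_end n(3,4)])
      (use N n(6) Lb L in auto)
  also have "\<dots> \<le> ennreal (N / ?Lb) * ennreal ?Z
      + ennreal (N * c powr a) * ennreal ((real K)\<^sup>2 / (\<rho> * m * poisson_rate \<rho>))"
  proof (intro add_mono mult_mono ennreal_leI order.refl)
    have Lpos: "block_weight \<beta> \<rho> ?n K > 0" using L Lb by linarith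
    show "N / block_weight \<beta> \<rho> ?n K \<le> N / ?Lb"
      using mult_pos_pos[OF Lpos Lb] by (intro divide_left_mono[OF L]) auto
    show "(\<Sum>s=2..K. 1 / (real (?n s) * poisson_rate \<rho>)) \<le> (real K)\<^sup>2 / (\<rho> * m * poisson_rate \<rho>)"
      using poisson_rate_pos \<rho> by (intro sum_inverse_block_end_le[OF \<rho> K N m]) auto
  qed (use grid_factor_nonneg[OF q A] c in auto)
  finally show ?thesis .
qed

lemma scaled_expectation_le:
  fixes N K :: nat and \<gamma> \<beta> chi a b \<delta> A \<rho> q :: real
  assumes E: "biased_sampler \<beta> E" and \<beta>: "0 < \<beta>" "\<beta> < 1" and chi: "chi * \<beta> = 1 - \<gamma> * (1 - \<beta>)"
    and a: "a > 0" and b: "b \<ge> 0" and \<delta>: "\<delta> > 0" and A: "A = a + \<beta> - 1" "A > 0"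
    and \<rho>: "0 < \<rho>" "\<rho> < 1" and q: "0 < q" "q < 1" and K: "K \<ge> 2" and N: "N \<ge> 1"
    and m: "real (nat \<lceil>N powr \<gamma>\<rceil>) \<ge> real K * real N + real K / (1 - \<rho>)"
  shows "ennreal (N powr (- chi * \<beta> + b * A)) *
      (\<integral>\<^sup>+\<omega>. ennreal (E (desc_atom (Xi \<omega>)) (nat \<lceil>N powr \<gamma>\<rceil>) N
        (\<lambda>x. x powr a * indicator {..\<delta> * N powr (-b)} x)) \<partial>P)
    \<le> ennreal (\<delta> powr A * grid_factor q A * K / (\<rho> * (\<rho> * K) powr \<beta> * (\<Sum>r=2..K. real r powr (-\<beta>)))
      + \<delta> powr a * (real K)\<^sup>2 / (\<rho> * poisson_rate \<rho>) * N powr (- \<gamma> * \<beta>))"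
proof -
  define m where "m = nat \<lceil>N powr \<gamma>\<rceil>"
  define c where "c = \<delta> * N powr (-b)"
  define S where "S = (\<Sum>r=2..K. real r powr (-\<beta>))"
  define Z where "Z = grid_factor q A"
  let ?Lb = "\<rho> * (\<rho> * K) powr \<beta> * S * m powr (1 - \<beta>) / K"
  let ?V = "N / ?Lb * (Z * c powr A) + N * c powr a * ((real K)\<^sup>2 / (\<rho> * m * poisson_rate \<rho>))"
  have m0: "real m > 0" using block_end_facts(2)[OF \<rho> K N m] unfolding m_def .
  have c: "c > 0" using \<delta> N unfolding c_def by simp
  have S: "S > 0" unfolding S_def using K by (intro sum_pos) auto
  have Z: "Z \<ge> 0" unfolding Z_def using grid_factor_nonneg[OF q A(2)] .
  have rate: "poisson_rate \<rho> > 0" using poisson_rate_pos \<rho> by simp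
  have "(\<integral>\<^sup>+\<omega>. ennreal (E (desc_atom (Xi \<omega>)) m N (\<lambda>x. x powr a * indicator {..c} x)) \<partial>P)
    \<le> ennreal (N / ?Lb) * ennreal (Z * c powr A)
      + ennreal (N * c powr a) * ennreal ((real K)\<^sup>2 / (\<rho> * m * poisson_rate \<rho>))"
    using expected_biased_sampler_block_end_le[OF E \<beta>(1) a _ c \<rho> q K N m[folded m_def]] A
    unfolding S_def Z_def by simp
  also have "\<dots> = ennreal ?V"
    using \<rho> m0 S Z rate by (intro ennreal_mult_add_mult) auto
  finally have "ennreal (N powr (- chi * \<beta> + b * A)) *
      (\<integral>\<^sup>+\<omega>. ennreal (E (desc_atom (Xi \<omega>)) m N (\<lambda>x. x powr a * indicator {..c} x)) \<partial>P)
    \<le> ennreal (N powr (- chi * \<beta> + b * A)) * ennreal ?V"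
    by (rule mult_left_mono) simp
  also have "\<dots> = ennreal (N powr (- chi * \<beta> + b * A) * ?V)" by (rule ennreal_mult'[symmetric]) simp
  also have "\<dots> \<le> ennreal (\<delta> powr A * Z * K / (\<rho> * (\<rho> * K) powr \<beta> * S)
      + \<delta> powr a * (real K)\<^sup>2 / (\<rho> * poisson_rate \<rho>) * N powr (- \<gamma> * \<beta>))"
    unfolding c_def using N \<beta>(2) b \<delta> chi A(1) \<rho>(1) K S Z rate
    by (intro ennreal_leI normalised_bound_le) (auto simp: m_def)
  finally show ?thesis unfolding m_def c_def S_def Z_def .
qed

end

section \<open>Asymptotics\<close>

lemma eventually_powr_ge_linear:
  fixes \<gamma> B :: real
  assumes "\<gamma> > 1"
  shows "eventually (\<lambda>N::nat. B * real N \<le> real N powr \<gamma>) sequentially"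
proof -
  define B' where "B' = max B 1"
  have "((\<lambda>N::nat. real N powr (-(\<gamma> - 1))) \<longlongrightarrow> 0) sequentially"
    using assms by (intro tendsto_neg_powr filterlim_real_sequentially) auto
  then have "eventually (\<lambda>N::nat. real N powr (-(\<gamma> - 1)) < 1 / B') sequentially"
    by (rule order_tendstoD) (simp add: B'_def)
  with eventually_ge_at_top[of 1] show ?thesis
  proof eventually_elim
    case (elim N)
    have N: "real N > 0" using elim by simp
    have B': "B' > 0" unfolding B'_def by simp
    have "real N powr (-(\<gamma> - 1)) = 1 / real N powr (\<gamma> - 1)"
      by (subst powr_minus) (simp add: divide_inverse)
    then have "1 / real N powr (\<gamma> - 1) < 1 / B'" using elim by simp
    then have "B' < real N powr (\<gamma> - 1)" using B' N by (simp add: field_simps)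
    then have "B' * real N \<le> real N powr (\<gamma> - 1) * real N" using N by simp
    also have "\<dots> = real N powr \<gamma>" using N by (simp add: powr_diff)
    finally show ?case
      using mult_right_mono[of B B' "real N"] unfolding B'_def by linarith
  qed
qed

lemma Limsup_le_if_eventually_le:
  fixes f :: "nat \<Rightarrow> ennreal" and g :: "nat \<Rightarrow> real"
  assumes f: "eventually (\<lambda>N. f N \<le> ennreal (C + g N)) sequentially"
    and g: "g \<longlonglongrightarrow> 0" and C: "C \<ge> 0"
  shows "limsup f \<le> ennreal C"
proof (rule ennreal_le_epsilon)
  fix e :: real assume e: "0 < e"
  have "eventually (\<lambda>N. g N < e) sequentially" using g e by (rule order_tendstoD)
  with f have "eventually (\<lambda>N. f N \<le> ennreal (C + e)) sequentially"
    by eventually_elim (erule order.trans, rule ennreal_leI, simp)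
  then have "limsup f \<le> ennreal (C + e)" by (rule Limsup_bounded)
  then show "limsup f \<le> ennreal C + ennreal e" using C e by (simp add: ennreal_plus)
qed

context inv_sq_poisson_process
begin

lemma limsup_scaled_expectation_le:
  fixes K :: nat and \<gamma> \<beta> chi a b \<delta> A \<rho> q :: real
  assumes E: "biased_sampler \<beta> E" and \<gamma>: "\<gamma> > 1" and \<beta>: "0 < \<beta>" "\<beta> < 1"
    and chi: "chi * \<beta> = 1 - \<gamma> * (1 - \<beta>)" and a: "a > 0" and b: "b \<ge> 0" and \<delta>: "\<delta> > 0"
    and A: "A = a + \<beta> - 1" "A > 0" and \<rho>: "0 < \<rho>" "\<rho> < 1" and q: "0 < q" "q < 1" and K: "K \<ge> 2"
  shows "limsup (\<lambda>N::nat. ennreal (N powr (- chi * \<beta> + b * A)) *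
      (\<integral>\<^sup>+\<omega>. ennreal (E (desc_atom (Xi \<omega>)) (nat \<lceil>N powr \<gamma>\<rceil>) N
        (\<lambda>x. x powr a * indicator {..\<delta> * N powr (-b)} x)) \<partial>P))
    \<le> ennreal (\<delta> powr A * grid_factor q A * K / (\<rho> * (\<rho> * K) powr \<beta> * (\<Sum>r=2..K. real r powr (-\<beta>))))"
proof (rule Limsup_le_if_eventually_le)
  have K0: "real K > 0" using K by simp
  have "eventually (\<lambda>N::nat. real K * real N + real K / (1 - \<rho>) \<le> real (nat \<lceil>N powr \<gamma>\<rceil>)) sequentially"
    using eventually_powr_ge_linear[OF \<gamma>, of "real K + real K / (1 - \<rho>)"] eventually_ge_at_top[of 1]
  proof eventually_elim
    case (elim N)
    have "real K / (1 - \<rho>) \<le> real K / (1 - \<rho>) * real N"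
      using mult_left_mono[of 1 "real N" "real K / (1 - \<rho>)"] elim \<rho> K0 by simp
    then have "real K * real N + real K / (1 - \<rho>) \<le> (real K + real K / (1 - \<rho>)) * real N"
      by (simp add: algebra_simps)
    also have "\<dots> \<le> real (nat \<lceil>N powr \<gamma>\<rceil>)" using elim(1) by linarith
    finally show ?case .
  qed
  with eventually_ge_at_top[of 1]
  show "eventually (\<lambda>N::nat. ennreal (N powr (- chi * \<beta> + b * A)) *
      (\<integral>\<^sup>+\<omega>. ennreal (E (desc_atom (Xi \<omega>)) (nat \<lceil>N powr \<gamma>\<rceil>) N
        (\<lambda>x. x powr a * indicator {..\<delta> * N powr (-b)} x)) \<partial>P)
    \<le> ennreal (\<delta> powr A * grid_factor q A * K / (\<rho> * (\<rho> * K) powr \<beta> * (\<Sum>r=2..K. real r powr (-\<beta>)))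
      + \<delta> powr a * (real K)\<^sup>2 / (\<rho> * poisson_rate \<rho>) * N powr (- \<gamma> * \<beta>))) sequentially"
    by eventually_elim (rule scaled_expectation_le[OF E \<beta> chi a b \<delta> A \<rho> q K])
  show "(\<lambda>N::nat. \<delta> powr a * (real K)\<^sup>2 / (\<rho> * poisson_rate \<rho>) * N powr (- \<gamma> * \<beta>)) \<longlonglongrightarrow> 0"
    using \<gamma> \<beta> by (intro tendsto_mult_right_zero tendsto_neg_powr filterlim_real_sequentially) auto
  have "(\<Sum>r=2..K. real r powr (-\<beta>)) \<ge> 0" by (intro sum_nonneg) simp
  then show "\<delta> powr A * grid_factor q A * K / (\<rho> * (\<rho> * K) powr \<beta> * (\<Sum>r=2..K. real r powr (-\<beta>))) \<ge> 0"
    using grid_factor_nonneg[OF q A(2)] \<rho> by simp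
qed

end

lemma block_constant_le:
  fixes \<beta> \<rho> :: real and K :: nat
  assumes \<beta>: "0 < \<beta>" "\<beta> < 1" and \<rho>: "0 < \<rho>" and K: "K \<ge> 3"
  shows "real K / (\<rho> * (\<rho> * real K) powr \<beta> * (\<Sum>r=2..K. real r powr (-\<beta>)))
     \<le> (1 - \<beta>) / (\<rho> powr (1 + \<beta>) * (1 - (2 / real K) powr (1 - \<beta>)))"
proof -
  define k where "k = real K"
  have k: "k \<ge> 3" unfolding k_def using K by simp
  define Sb where "Sb = (k powr (1 - \<beta>) - 2 powr (1 - \<beta>)) / (1 - \<beta>)"
  have "k powr (1 - \<beta>) \<le> (k + 1) powr (1 - \<beta>)" using k \<beta> by (intro powr_mono2) auto
  then have "Sb \<le> ((k + 1) powr (1 - \<beta>) - 2 powr (1 - \<beta>)) / (1 - \<beta>)"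
    unfolding Sb_def using \<beta> by (intro divide_right_mono) auto
  also have "\<dots> \<le> (\<Sum>r=2..K. real r powr (-\<beta>))"
    unfolding k_def using sum_powr_neg_ge[OF \<beta>, of K] K by simp
  finally have Sb_le: "Sb \<le> (\<Sum>r=2..K. real r powr (-\<beta>))" .
  have k2: "2 powr (1 - \<beta>) < k powr (1 - \<beta>)" using k \<beta> by (intro powr_less_mono2) auto
  have Sb: "Sb > 0" unfolding Sb_def using k2 \<beta> by simp
  have P: "\<rho> * (\<rho> * k) powr \<beta> > 0" using \<rho> k by simp
  have "k / (\<rho> * (\<rho> * k) powr \<beta> * (\<Sum>r=2..K. real r powr (-\<beta>))) \<le> k / (\<rho> * (\<rho> * k) powr \<beta> * Sb)"
    using Sb_le Sb P k \<rho> by (intro divide_left_mono mult_left_mono mult_pos_pos) auto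
  also have "\<dots> = (1 - \<beta>) / (\<rho> powr (1 + \<beta>) * (1 - (2 / k) powr (1 - \<beta>)))"
  proof -
    have r1: "(2 / k) powr (1 - \<beta>) = 2 powr (1 - \<beta>) / k powr (1 - \<beta>)" using k by (simp add: powr_divide)
    have a1: "(\<rho> * k) powr \<beta> = \<rho> powr \<beta> * k powr \<beta>" using \<rho> k by (simp add: powr_mult)
    have a2: "\<rho> powr (1 + \<beta>) = \<rho> * \<rho> powr \<beta>" using \<rho> by (simp add: powr_add)
    have a3: "k powr (1 - \<beta>) = k / k powr \<beta>" using k by (simp add: powr_diff)
    have pos: "k powr \<beta> > 0" "k powr (1 - \<beta>) > 0" using k by simp_all
    have "k powr (1 - \<beta>) - 2 powr (1 - \<beta>) \<noteq> 0" using k2 by simp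
    then show ?thesis unfolding Sb_def r1 a1 a2 using \<beta> \<rho> pos k by (simp add: field_simps a3)
  qed
  finally show ?thesis unfolding k_def .
qed

lemma grid_factor_tendsto:
  fixes A :: real
  assumes A: "A > 0"
  shows "((\<lambda>q. grid_factor q A) \<longlongrightarrow> 1 / A) (at 1)"
proof -
  have "((\<lambda>q::real. q powr A) has_field_derivative A) (at 1)"
    by (auto intro!: derivative_eq_intros)
  then have "((\<lambda>q. (q powr A - 1 powr A) / (q - 1)) \<longlongrightarrow> A) (at 1)"
    by (simp add: has_field_derivative_iff)
  then have "((\<lambda>q. q powr (-(A+1)) / ((q powr A - 1) / (q - 1))) \<longlongrightarrow> 1 powr (-(A+1)) / A) (at 1)"
    using A by (intro tendsto_intros) auto
  moreover have "eventually (\<lambda>q. q powr (-(A+1)) / ((q powr A - 1) / (q - 1)) = grid_factor q A) (at 1)"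
    using eventually_at_ball'[OF zero_less_one, of 1 UNIV]
  proof eventually_elim
    case (elim q)
    then have q: "0 < q" "q \<noteq> 1" by (auto simp: dist_real_def)
    then have "q powr A \<noteq> 1" using A by (auto simp: powr_eq_one_iff_gen)
    with q show ?case by (simp add: grid_factor_def field_simps)
  qed
  ultimately show ?thesis by (simp add: tendsto_cong)
qed

context inv_sq_poisson_process
begin

lemma limsup_scaled_expectation_le_explicit:
  fixes K :: nat and \<gamma> \<beta> chi a b \<delta> A \<rho> :: real
  assumes E: "biased_sampler \<beta> E" and \<gamma>: "\<gamma> > 1" and \<beta>: "0 < \<beta>" "\<beta> < 1"
    and chi: "chi * \<beta> = 1 - \<gamma> * (1 - \<beta>)" and a: "a > 0" and b: "b \<ge> 0" and \<delta>: "\<delta> > 0"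
    and A: "A = a + \<beta> - 1" "A > 0" and \<rho>: "0 < \<rho>" "\<rho> < 1" and K: "K \<ge> 3"
  shows "limsup (\<lambda>N::nat. ennreal (N powr (- chi * \<beta> + b * A)) *
      (\<integral>\<^sup>+\<omega>. ennreal (E (desc_atom (Xi \<omega>)) (nat \<lceil>N powr \<gamma>\<rceil>) N
        (\<lambda>x. x powr a * indicator {..\<delta> * N powr (-b)} x)) \<partial>P))
    \<le> ennreal (\<delta> powr A * grid_factor \<rho> A *
        ((1 - \<beta>) / (\<rho> powr (1 + \<beta>) * (1 - (2 / real K) powr (1 - \<beta>)))))"
proof -
  have Z: "\<delta> powr A * grid_factor \<rho> A \<ge> 0" using grid_factor_nonneg[OF \<rho> A(2)] by simp
  have "\<delta> powr A * grid_factor \<rho> A * K / (\<rho> * (\<rho> * K) powr \<beta> * (\<Sum>r=2..K. real r powr (-\<beta>)))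
    = \<delta> powr A * grid_factor \<rho> A * (K / (\<rho> * (\<rho> * K) powr \<beta> * (\<Sum>r=2..K. real r powr (-\<beta>))))"
    by simp
  also have "\<dots> \<le> \<delta> powr A * grid_factor \<rho> A *
      ((1 - \<beta>) / (\<rho> powr (1 + \<beta>) * (1 - (2 / real K) powr (1 - \<beta>))))"
    using block_constant_le[OF \<beta> \<rho>(1) K] Z by (intro mult_left_mono)
  finally show ?thesis
    using K by (intro order.trans[OF limsup_scaled_expectation_le[OF E \<gamma> \<beta> chi a b \<delta> A \<rho> \<rho>]]
        ennreal_leI) auto
qed

lemma limsup_scaled_expectation_le_limit:
  fixes \<gamma> \<beta> chi a b \<delta> A :: real
  assumes E: "biased_sampler \<beta> E" and \<gamma>: "\<gamma> > 1" and \<beta>: "0 < \<beta>" "\<beta> < 1"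
    and chi: "chi * \<beta> = 1 - \<gamma> * (1 - \<beta>)" and a: "a > 0" and b: "b \<ge> 0" and \<delta>: "\<delta> > 0"
    and A: "A = a + \<beta> - 1" "A > 0"
  shows "limsup (\<lambda>N::nat. ennreal (N powr (- chi * \<beta> + b * A)) *
      (\<integral>\<^sup>+\<omega>. ennreal (E (desc_atom (Xi \<omega>)) (nat \<lceil>N powr \<gamma>\<rceil>) N
        (\<lambda>x. x powr a * indicator {..\<delta> * N powr (-b)} x)) \<partial>P))
    \<le> ennreal ((1 - \<beta>) * \<delta> powr A / A)"
proof -
  define \<rho> where "\<rho> j = 1 - 1 / (real j + 2)" for j :: nat
  define U where "U j = \<delta> powr A * grid_factor (\<rho> j) A *
    ((1 - \<beta>) / (\<rho> j powr (1 + \<beta>) * (1 - (2 / real (j + 3)) powr (1 - \<beta>))))" for j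
  have \<rho>: "0 < \<rho> j" "\<rho> j < 1" for j unfolding \<rho>_def by (auto simp: field_simps)
  have "(\<lambda>j. 1 / (real j + 2)) \<longlonglongrightarrow> 0"
    using LIMSEQ_Suc[OF LIMSEQ_Suc[OF lim_const_over_n[of 1]]] by (simp add: add.commute)
  then have "\<rho> \<longlonglongrightarrow> 1" unfolding \<rho>_def by (auto intro: tendsto_eq_intros)
  moreover from this have "filterlim \<rho> (at 1) sequentially"
    using \<rho>(2) by (intro filterlim_atI) (auto simp: less_imp_neq)
  then have "(\<lambda>j. grid_factor (\<rho> j) A) \<longlonglongrightarrow> 1 / A"
    by (rule filterlim_compose[OF grid_factor_tendsto[OF A(2)]])
  moreover have "(\<lambda>j. 2 / real (j + 3)) \<longlonglongrightarrow> 0"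
    using LIMSEQ_Suc[OF LIMSEQ_Suc[OF LIMSEQ_Suc[OF lim_const_over_n[of 2]]]] by (simp add: add.commute)
  then have "(\<lambda>j. (2 / real (j + 3)) powr (1 - \<beta>)) \<longlonglongrightarrow> 0"
    using \<beta> by (intro tendsto_zero_powrI[OF _ tendsto_const]) auto
  ultimately have "U \<longlonglongrightarrow> \<delta> powr A * (1 / A) * ((1 - \<beta>) / (1 powr (1 + \<beta>) * (1 - 0)))"
    unfolding U_def by (intro tendsto_intros) auto
  then have "U \<longlonglongrightarrow> (1 - \<beta>) * \<delta> powr A / A" by (simp add: mult.commute)
  moreover have "limsup (\<lambda>N::nat. ennreal (N powr (- chi * \<beta> + b * A)) *
      (\<integral>\<^sup>+\<omega>. ennreal (E (desc_atom (Xi \<omega>)) (nat \<lceil>N powr \<gamma>\<rceil>) N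
        (\<lambda>x. x powr a * indicator {..\<delta> * N powr (-b)} x)) \<partial>P)) \<le> ennreal (U j)" for j
    unfolding U_def by (rule limsup_scaled_expectation_le_explicit[OF E \<gamma> \<beta> chi a b \<delta> A \<rho>]) simp
  ultimately show ?thesis
    by (intro tendsto_lowerbound[OF tendsto_ennrealI _ trivial_limit_sequentially]) auto
qed

end

theorem corollary4p4:
  fixes P :: "'a measure" and Xi :: "'a \<Rightarrow> real set"
    and \<gamma> \<beta> chi a b \<delta> A :: real
  assumes "\<gamma> > 1" and "0 < \<beta>" and "\<beta> < 1"
    and "chi = (1 - \<gamma> * (1 - \<beta>)) / \<beta>"
    and "prob_space P"
    and "poisson_point_process P Xi inv_sq_intensity"
    and "a > 0" and "b \<ge> 0" and "\<delta> > 0"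
    and "A = a + \<beta> - 1" and "A > 0"
  shows
    "limsup (\<lambda>N::nat. ennreal (real N powr (- chi * \<beta> + b * A)) *
        (\<integral>\<^sup>+ \<omega>. ennreal (\<Sum>xs\<in>wor_lists (nat \<lceil>real N powr \<gamma>\<rceil>) N.
            wor_prob (desc_atom (Xi \<omega>)) \<beta> (nat \<lceil>real N powr \<gamma>\<rceil>) xs *
            (\<Sum>k<N. desc_atom (Xi \<omega>) (xs ! k) powr a *
               indicator {..\<delta> * real N powr (- b)} (desc_atom (Xi \<omega>) (xs ! k)))) \<partial>P))
      \<le> ennreal ((1 - \<beta>) * \<delta> powr A / A)
   \<and> limsup (\<lambda>N::nat. ennreal (real N powr (- chi * \<beta> + b * A)) *
        (\<integral>\<^sup>+ \<omega>. ennreal (\<Sum>xs\<in>wr_lists (nat \<lceil>real N powr \<gamma>\<rceil>) N.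
            wr_prob (desc_atom (Xi \<omega>)) \<beta> (nat \<lceil>real N powr \<gamma>\<rceil>) xs *
            (\<Sum>k<N. desc_atom (Xi \<omega>) (xs ! k) powr a *
               indicator {..\<delta> * real N powr (- b)} (desc_atom (Xi \<omega>) (xs ! k)))) \<partial>P))
      \<le> ennreal ((1 - \<beta>) * \<delta> powr A / A)"
proof -
  interpret inv_sq_poisson_process P Xi
    using assms(5,6) by (rule inv_sq_poisson_process.intro[OF _ inv_sq_poisson_process_axioms.intro])
  have chi: "chi * \<beta> = 1 - \<gamma> * (1 - \<beta>)" using assms(2,4) by simp
  note limit = limsup_scaled_expectation_le_limit[OF _ assms(1-3) chi assms(7-11)]
  show ?thesis
    using limit[OF biased_sampler_wor_mean] limit[OF biased_sampler_wr_mean]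
    unfolding wor_mean_def wr_mean_def by blast
qed

end
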